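(* Let $p\ge3$ be prime, $G=\mathrm{GL}_2(\mathbb{F}_p)$, and $H\subset G$ a subgroup isomorphic to the quaternion group $H_8$. Then $$N_G(H)/C(G)\simeq \mathrm{Aut}(H)\simeq S_4,$$ the first isomorphism being induced by conjugation. Moreover: (a) if $(2/p)=1$, every matrix in $N_G(H)$ has square determinant; (b) if $(2/p)=-1$, the matrices in $N_G(H)$ with square determinant are exactly those whose image in $\mathrm{Aut}(H)\simeq S_4$ lies in the subgroup isomorphic to $A_4$.
   Context: $N_G(H)$ is the normalizer of $H$ in $G$, $C(G)$ the center of $G$ (scalar matrices), $S_4,A_4$ the symmetric and alternating groups on 4 letters, and $(\cdot/p)$ the Legendre symbol. *)

theory Defs
  imports "HOL-Algebra.Group_Action" "HOL-Algebra.Sym_Groups" "HOL-Number_Theory.Number_Theory"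
begin

text \<open>2x2 matrices over F_p are quadruples (a,b,c,d) standing for the matrix [[a,b],[c,d]],
  with entries represented by the integers 0..p-1.\<close>

type_synonym mat2 = "int \<times> int \<times> int \<times> int"

definition mat2_det :: "nat \<Rightarrow> mat2 \<Rightarrow> int" where
  "mat2_det p M = (case M of (a,b,c,d) \<Rightarrow> (a*d - b*c) mod int p)"

definition mat2_mult :: "nat \<Rightarrow> mat2 \<Rightarrow> mat2 \<Rightarrow> mat2" where
  "mat2_mult p M N = (case M of (a,b,c,d) \<Rightarrow> case N of (e,f,g,h) \<Rightarrow>
     ((a*e + b*g) mod int p, (a*f + b*h) mod int p, (c*e + d*g) mod int p, (c*f + d*h) mod int p))"

definition GL2_carrier :: "nat \<Rightarrow> mat2 set" where
  "GL2_carrier p = {M. fst M \<in> {0..<int p} \<and> fst (snd M) \<in> {0..<int p}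
                      \<and> fst (snd (snd M)) \<in> {0..<int p} \<and> snd (snd (snd M)) \<in> {0..<int p}
                      \<and> mat2_det p M \<noteq> 0}"

definition GL2 :: "nat \<Rightarrow> mat2 monoid" where
  "GL2 p = \<lparr> carrier = GL2_carrier p, monoid.mult = mat2_mult p, one = (1,0,0,1) \<rparr>"

definition GL2_scalars :: "nat \<Rightarrow> mat2 set" where
  "GL2_scalars p = {(a,0,0,a) | a. a \<in> {1..<int p}}"

text \<open>The quaternion group H_8 = {\<plusminus>1, \<plusminus>i, \<plusminus>j, \<plusminus>k} under the Hamilton product,
  quaternions a + b i + c j + d k being written as quadruples (a,b,c,d).\<close>
definition ham_mult :: "mat2 \<Rightarrow> mat2 \<Rightarrow> mat2" where
  "ham_mult x y = (case x of (a1,b1,c1,d1) \<Rightarrow> case y of (a2,b2,c2,d2) \<Rightarrow>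
     (a1*a2 - b1*b2 - c1*c2 - d1*d2,
      a1*b2 + b1*a2 + c1*d2 - d1*c2,
      a1*c2 - b1*d2 + c1*a2 + d1*b2,
      a1*d2 + b1*c2 - c1*b2 + d1*a2))"

definition quaternion_group :: "(int \<times> int \<times> int \<times> int) monoid" where
  "quaternion_group = \<lparr> carrier = {(1,0,0,0), (-1,0,0,0), (0,1,0,0), (0,-1,0,0),
                                   (0,0,1,0), (0,0,-1,0), (0,0,0,1), (0,0,0,-1)},
                        monoid.mult = ham_mult,
                        one = (1,0,0,0) \<rparr>"

definition conj_aut :: "('a, 'b) monoid_scheme \<Rightarrow> 'a set \<Rightarrow> 'a \<Rightarrow> ('a \<Rightarrow> 'a)" where
  "conj_aut G H g = (\<lambda>h \<in> H. g \<otimes>\<^bsub>G\<^esub> h \<otimes>\<^bsub>G\<^esub> inv\<^bsub>G\<^esub> g)"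

end

theory Submission
  imports Defs
begin

text \<open>
  Inside \<open>H\<close> the image \<open>Z\<close> of \<open>-1\<close> commutes with the noncommuting images \<open>I, J\<close> of \<open>i, j\<close>, so it
  is the scalar \<open>-1\<close>. Hence \<open>I, J, K\<close> satisfy the quaternion relations modulo \<open>p\<close> and are
  traceless, and \<open>x \<mapsto> x\<^sub>1 + x\<^sub>2 I + x\<^sub>3 J + x\<^sub>4 K\<close> is multiplicative on integral quaternions with
  determinant equal to the norm. For 24 integral quaternions \<open>w\<close> of norm 1, 2 or 4, representing the
  binary octahedral group modulo \<open>\<plusminus>1\<close>, the matrix of \<open>w\<close> normalizes \<open>H\<close> and induces
  \<open>q \<mapsto> w q w\<^sup>-\<^sup>1\<close>; these are all 24 automorphisms of \<open>H\<close>, which permute the four diagonals of the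
  cube faithfully, so \<open>Aut(H) \<cong> S\<^sub>4\<close>. A matrix inducing the identity commutes with \<open>I\<close> and \<open>J\<close> and
  is scalar, so every \<open>g \<in> N\<^sub>G(H)\<close> is a scalar times the matrix of some \<open>w\<close> and \<open>det g\<close> is \<open>N(w)\<close>
  up to a square. If 2 is not a square, \<open>det g\<close> is a square exactly when \<open>N(w) \<noteq> 2\<close>; these 12
  automorphisms are squares, hence lie in, and by counting form, the subgroup of index 2.
\<close>

section \<open>Integer \<open>2 \<times> 2\<close> matrices modulo \<open>p\<close>\<close>

definition ent1 :: "mat2 \<Rightarrow> int" where "ent1 M = fst M"
definition ent2 :: "mat2 \<Rightarrow> int" where "ent2 M = fst (snd M)"
definition ent3 :: "mat2 \<Rightarrow> int" where "ent3 M = fst (snd (snd M))"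
definition ent4 :: "mat2 \<Rightarrow> int" where "ent4 M = snd (snd (snd M))"

lemma ent_simps [simp]:
  "ent1 (a,b,c,d) = a" "ent2 (a,b,c,d) = b" "ent3 (a,b,c,d) = c" "ent4 (a,b,c,d) = d"
  by (simp_all add: ent1_def ent2_def ent3_def ent4_def)

lemma mat2_eq_iff:
  "(M::mat2) = N \<longleftrightarrow> ent1 M = ent1 N \<and> ent2 M = ent2 N \<and> ent3 M = ent3 N \<and> ent4 M = ent4 N"
  by (cases M; cases N) (auto simp: ent1_def ent2_def ent3_def ent4_def)

definition mat_mod :: "nat \<Rightarrow> mat2 \<Rightarrow> mat2" where
  "mat_mod p M = (ent1 M mod int p, ent2 M mod int p, ent3 M mod int p, ent4 M mod int p)"

definition mat_mul :: "mat2 \<Rightarrow> mat2 \<Rightarrow> mat2" where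
  "mat_mul M N = (ent1 M * ent1 N + ent2 M * ent3 N, ent1 M * ent2 N + ent2 M * ent4 N,
                  ent3 M * ent1 N + ent4 M * ent3 N, ent3 M * ent2 N + ent4 M * ent4 N)"

definition mat_add :: "mat2 \<Rightarrow> mat2 \<Rightarrow> mat2" where
  "mat_add M N = (ent1 M + ent1 N, ent2 M + ent2 N, ent3 M + ent3 N, ent4 M + ent4 N)"

definition mat_scale :: "int \<Rightarrow> mat2 \<Rightarrow> mat2" where
  "mat_scale c M = (c * ent1 M, c * ent2 M, c * ent3 M, c * ent4 M)"

lemma ent_mat_mod [simp]:
  "ent1 (mat_mod p M) = ent1 M mod int p" "ent2 (mat_mod p M) = ent2 M mod int p"
  "ent3 (mat_mod p M) = ent3 M mod int p" "ent4 (mat_mod p M) = ent4 M mod int p"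
  by (simp_all add: mat_mod_def)
lemma ent_mat_mul [simp]:
  "ent1 (mat_mul M N) = ent1 M * ent1 N + ent2 M * ent3 N"
  "ent2 (mat_mul M N) = ent1 M * ent2 N + ent2 M * ent4 N"
  "ent3 (mat_mul M N) = ent3 M * ent1 N + ent4 M * ent3 N"
  "ent4 (mat_mul M N) = ent3 M * ent2 N + ent4 M * ent4 N"
  by (simp_all add: mat_mul_def)
lemma ent_mat_add [simp]:
  "ent1 (mat_add M N) = ent1 M + ent1 N" "ent2 (mat_add M N) = ent2 M + ent2 N"
  "ent3 (mat_add M N) = ent3 M + ent3 N" "ent4 (mat_add M N) = ent4 M + ent4 N"
  by (simp_all add: mat_add_def)
lemma ent_mat_scale [simp]:
  "ent1 (mat_scale c M) = c * ent1 M" "ent2 (mat_scale c M) = c * ent2 M"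
  "ent3 (mat_scale c M) = c * ent3 M" "ent4 (mat_scale c M) = c * ent4 M"
  by (simp_all add: mat_scale_def)

lemmas cong_int_intros = cong_add cong_mult cong_diff cong_minus_minus_iff[THEN iffD2] cong_mod_leftI cong_refl

lemma mat_mod_mat_mod [simp]: "mat_mod p (mat_mod p M) = mat_mod p M"
  by (simp add: mat2_eq_iff)
lemma mat_mod_mat_mul_left [simp]: "mat_mod p (mat_mul (mat_mod p M) N) = mat_mod p (mat_mul M N)"
  by (simp add: mat2_eq_iff flip: cong_def) (intro conjI cong_int_intros)
lemma mat_mod_mat_mul_right [simp]: "mat_mod p (mat_mul M (mat_mod p N)) = mat_mod p (mat_mul M N)"
  by (simp add: mat2_eq_iff flip: cong_def) (intro conjI cong_int_intros)
lemma mat_mod_mat_scale [simp]: "mat_mod p (mat_scale c (mat_mod p M)) = mat_mod p (mat_scale c M)"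
  by (simp add: mat2_eq_iff flip: cong_def) (intro conjI cong_int_intros)

lemma mat_mod_mat_scale_mat_mul_left [simp]:
  "mat_mod p (mat_scale c (mat_mul (mat_mod p M) N)) = mat_mod p (mat_scale c (mat_mul M N))"
  by (metis mat_mod_mat_scale mat_mod_mat_mul_left)

definition det_int :: "mat2 \<Rightarrow> int" where
  "det_int M = ent1 M * ent4 M - ent2 M * ent3 M"

definition mat_adj :: "mat2 \<Rightarrow> mat2" where
  "mat_adj M = (ent4 M, - ent2 M, - ent3 M, ent1 M)"

definition mat_trace :: "mat2 \<Rightarrow> int" where
  "mat_trace M = ent1 M + ent4 M"

abbreviation id2 :: mat2 where
  "id2 \<equiv> (1, 0, 0, 1)"

lemma mat2_mult_conv: "mat2_mult p M N = mat_mod p (mat_mul M N)"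
  by (cases M; cases N) (simp add: mat2_mult_def mat_mod_def mat_mul_def)

lemma mat2_det_conv: "mat2_det p M = det_int M mod int p"
  by (cases M) (simp add: mat2_det_def det_int_def)

lemma mat_mod_eq_iff_dvd:
  "mat_mod p A = mat_mod p B \<longleftrightarrow> int p dvd ent1 A - ent1 B \<and> int p dvd ent2 A - ent2 B
     \<and> int p dvd ent3 A - ent3 B \<and> int p dvd ent4 A - ent4 B"
  by (simp add: mat2_eq_iff mod_eq_dvd_iff)

lemma mat_mul_assoc: "mat_mul (mat_mul A B) C = mat_mul A (mat_mul B C)"
  by (simp add: mat2_eq_iff algebra_simps)

lemma mat_mul_scale:
  "mat_mul (mat_scale c A) B = mat_scale c (mat_mul A B)"
  "mat_mul A (mat_scale c B) = mat_scale c (mat_mul A B)"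
  by (simp_all add: mat2_eq_iff algebra_simps)

lemma mat_scale_scale: "mat_scale c (mat_scale d A) = mat_scale (c * d) A"
  by (simp add: mat2_eq_iff algebra_simps)

lemma mat_mul_id2: "mat_mul id2 A = A" "mat_mul A id2 = A"
  by (simp_all add: mat2_eq_iff)

lemma mat_mul_adj:
  "mat_mul A (mat_adj A) = mat_scale (det_int A) id2" "mat_mul (mat_adj A) A = mat_scale (det_int A) id2"
  by (simp_all add: mat2_eq_iff mat_adj_def det_int_def algebra_simps)

lemma det_int_mat_mul: "det_int (mat_mul A B) = det_int A * det_int B"
  by (simp add: det_int_def algebra_simps)

lemma det_int_mat_adj: "det_int (mat_adj A) = det_int A"
  by (simp add: det_int_def mat_adj_def)

lemma det_int_mat_scale: "det_int (mat_scale c A) = c * c * det_int A"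
  by (simp add: det_int_def algebra_simps)

lemma det_int_mat_mod: "det_int (mat_mod p A) mod int p = det_int A mod int p"
  by (simp add: det_int_def flip: cong_def) (intro cong_int_intros)

lemma dvd_det_int_mat_mod: "int p dvd det_int (mat_mod p A) \<longleftrightarrow> int p dvd det_int A"
  using det_int_mat_mod[of p A] by (simp add: dvd_eq_mod_eq_0)

lemma cayley_hamilton:
  "mat_mul A A = mat_add (mat_scale (mat_trace A) A) (mat_scale (- det_int A) id2)"
  by (simp add: mat2_eq_iff mat_trace_def det_int_def algebra_simps)

lemma mat_mod_scale_unit:
  assumes "[c * n = 1] (mod int p)"
  shows "mat_mod p (mat_scale (c * n) A) = mat_mod p A"
  using cong_scalar_right[OF assms] unfolding mat_mod_eq_iff_dvd
  by (simp add: cong_iff_dvd_diff)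

lemma mod_eq_self_iff: "(0::int) < n \<Longrightarrow> x mod n = x \<longleftrightarrow> x \<in> {0..<n}"
  by (metis atLeastLessThan_iff mod_pos_pos_trivial pos_mod_bound pos_mod_sign)

lemma GL2_simps [simp]:
  "carrier (GL2 p) = GL2_carrier p" "monoid.mult (GL2 p) = mat2_mult p" "one (GL2 p) = id2"
  by (simp_all add: GL2_def)

lemma GL2_carrier_iff:
  "p > 0 \<Longrightarrow> M \<in> GL2_carrier p \<longleftrightarrow> mat_mod p M = M \<and> \<not> int p dvd det_int M"
  by (cases M)
    (simp add: GL2_carrier_def mat2_det_def mat_mod_def det_int_def dvd_eq_mod_eq_0 mod_eq_self_iff)

lemma inverse_mod_prime_exists:
  assumes "prime (q::int)" "\<not> q dvd d"
  shows "\<exists>c. [d * c = 1] (mod q)"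
  using assms cong_solve_coprime_int prime_imp_coprime coprime_commute by blast

lemma group_GL2:
  assumes "prime p"
  shows "group (GL2 p)"
proof -
  have p0: "p > 0" and p1: "int p > 1" using prime_gt_1_nat[OF assms] by auto
  have P: "prime (int p)" using assms by simp
  show ?thesis
  proof (rule groupI)
    fix x y assume "x \<in> carrier (GL2 p)" "y \<in> carrier (GL2 p)"
    then have "\<not> int p dvd det_int x * det_int y"
      using P p0 prime_dvd_multD GL2_carrier_iff by (metis GL2_simps(1))
    then show "x \<otimes>\<^bsub>GL2 p\<^esub> y \<in> carrier (GL2 p)"
      using p0 by (simp add: GL2_carrier_iff mat2_mult_conv dvd_det_int_mat_mod det_int_mat_mul)
  next
    show "\<one>\<^bsub>GL2 p\<^esub> \<in> carrier (GL2 p)"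
      using p0 p1 by (simp add: GL2_carrier_iff det_int_def mat_mod_def)
  next
    fix x y z
    show "x \<otimes>\<^bsub>GL2 p\<^esub> y \<otimes>\<^bsub>GL2 p\<^esub> z = x \<otimes>\<^bsub>GL2 p\<^esub> (y \<otimes>\<^bsub>GL2 p\<^esub> z)"
      by (simp add: mat2_mult_conv mat_mul_assoc)
  next
    fix x assume "x \<in> carrier (GL2 p)"
    then show "\<one>\<^bsub>GL2 p\<^esub> \<otimes>\<^bsub>GL2 p\<^esub> x = x"
      using p0 by (simp add: GL2_carrier_iff mat2_mult_conv mat_mul_id2)
  next
    fix x assume "x \<in> carrier (GL2 p)"
    then have x: "mat_mod p x = x" "\<not> int p dvd det_int x" using p0 by (auto simp: GL2_carrier_iff)
    obtain c where c: "[det_int x * c = 1] (mod int p)"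
      using inverse_mod_prime_exists[OF P x(2)] by blast
    have "\<not> int p dvd c"
    proof
      assume "int p dvd c"
      then have "[det_int x * c = 0] (mod int p)" by (simp add: cong_0_iff)
      then have "int p dvd 1" using c by (metis cong_0_iff cong_sym cong_trans)
      then show False using p1 by simp
    qed
    then have "\<not> int p dvd c * c * det_int x"
      using x(2) P by (metis prime_dvd_multD)
    moreover define y where "y = mat_mod p (mat_scale c (mat_adj x))"
    ultimately have "y \<in> carrier (GL2 p)"
      using p0
      by (simp only: GL2_simps GL2_carrier_iff y_def mat_mod_mat_mod dvd_det_int_mat_mod
          det_int_mat_scale det_int_mat_adj) simp
    moreover have "y \<otimes>\<^bsub>GL2 p\<^esub> x = mat_mod p (mat_scale (c * det_int x) id2)"
      by (simp add: y_def mat2_mult_conv mat_mul_scale mat_mul_adj mat_scale_scale)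
    moreover have "mat_mod p (mat_scale (c * det_int x) id2) = id2"
      using c p0 p1 by (simp add: mat_mod_def cong_def mult.commute)
    ultimately show "\<exists>y\<in>carrier (GL2 p). y \<otimes>\<^bsub>GL2 p\<^esub> x = \<one>\<^bsub>GL2 p\<^esub>" by auto
  qed
qed

definition commute_mod :: "nat \<Rightarrow> mat2 \<Rightarrow> mat2 \<Rightarrow> bool" where
  "commute_mod p A B \<longleftrightarrow> mat_mod p (mat_mul A B) = mat_mod p (mat_mul B A)"

text \<open>Two matrices commute iff the vectors \<open>(b, c, a - d)\<close> of their entries are parallel, i.e.\ have
  vanishing cross product; parallelism to a nonzero vector is transitive over a field.\<close>

lemma commute_mod_iff:
  "commute_mod p A X \<longleftrightarrow>
    int p dvd ent3 A * (ent1 X - ent4 X) - (ent1 A - ent4 A) * ent3 X \<and>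
    int p dvd (ent1 A - ent4 A) * ent2 X - ent2 A * (ent1 X - ent4 X) \<and>
    int p dvd ent2 A * ent3 X - ent3 A * ent2 X"
proof -
  have "(ent1 A * ent1 X + ent2 A * ent3 X) - (ent1 X * ent1 A + ent2 X * ent3 A)
          = ent2 A * ent3 X - ent3 A * ent2 X"
    "(ent1 A * ent2 X + ent2 A * ent4 X) - (ent1 X * ent2 A + ent2 X * ent4 A)
          = (ent1 A - ent4 A) * ent2 X - ent2 A * (ent1 X - ent4 X)"
    "(ent3 A * ent1 X + ent4 A * ent3 X) - (ent3 X * ent1 A + ent4 X * ent3 A)
          = ent3 A * (ent1 X - ent4 X) - (ent1 A - ent4 A) * ent3 X"
    "(ent3 A * ent2 X + ent4 A * ent4 X) - (ent3 X * ent2 A + ent4 X * ent4 A)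
          = - (ent2 A * ent3 X - ent3 A * ent2 X)"
    by (simp_all add: algebra_simps)
  then show ?thesis
    unfolding commute_mod_def mat_mod_eq_iff_dvd by (simp only: ent_mat_mul dvd_minus_iff) blast
qed

lemma cross_product_dvd_trans:
  fixes P ap aq ar bp bq br xp xq xr :: int
  assumes A: "P dvd aq*xr - ar*xq" "P dvd ar*xp - ap*xr" "P dvd ap*xq - aq*xp"
    and B: "P dvd bq*xr - br*xq" "P dvd br*xp - bp*xr" "P dvd bp*xq - bq*xp"
    and nz: "\<not> (P dvd xp \<and> P dvd xq \<and> P dvd xr)" and pr: "prime P"
  shows "P dvd aq*br - ar*bq \<and> P dvd ar*bp - ap*br \<and> P dvd ap*bq - aq*bp"
proof -
  define A1 where "A1 = aq*xr - ar*xq"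
  define A2 where "A2 = ar*xp - ap*xr"
  define A3 where "A3 = ap*xq - aq*xp"
  define B1 where "B1 = bq*xr - br*xq"
  define B2 where "B2 = br*xp - bp*xr"
  define B3 where "B3 = bp*xq - bq*xp"
  have d: "P dvd A1" "P dvd A2" "P dvd A3" "P dvd B1" "P dvd B2" "P dvd B3"
    using A B by (simp_all add: A1_def A2_def A3_def B1_def B2_def B3_def)
  have i1: "xp*(aq*br - ar*bq) = - A3*br - A2*bq - ap*B1" "xp*(ar*bp - ap*br) = A2*bp - ap*B2"
     "xp*(ap*bq - aq*bp) = A3*bp - ap*B3"
    by (simp_all add: A1_def A2_def A3_def B1_def B2_def B3_def algebra_simps)
  have i2: "xq*(aq*br - ar*bq) = A1*bq - aq*B1" "xq*(ar*bp - ap*br) = - A1*bp - A3*br - aq*B2"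
     "xq*(ap*bq - aq*bp) = A3*bq - aq*B3"
    by (simp_all add: A1_def A2_def A3_def B1_def B2_def B3_def algebra_simps)
  have i3: "xr*(aq*br - ar*bq) = A1*br - ar*B1" "xr*(ar*bp - ap*br) = A2*br - ar*B2"
     "xr*(ap*bq - aq*bp) = - A2*bq - A1*bp - ar*B3"
    by (simp_all add: A1_def A2_def A3_def B1_def B2_def B3_def algebra_simps)
  obtain x where x: "x = xp \<or> x = xq \<or> x = xr" "\<not> P dvd x" using nz by blast
  then have "P dvd x * (aq*br - ar*bq) \<and> P dvd x * (ar*bp - ap*br) \<and> P dvd x * (ap*bq - aq*bp)"
    using d i1 i2 i3 by (auto simp add: dvd_add dvd_diff dvd_mult2 dvd_mult)
  then show ?thesis using x(2) pr by (meson prime_dvd_multD)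
qed

lemma commute_mod_scalar:
  assumes "prime p" "commute_mod p A X" "commute_mod p B X" "\<not> commute_mod p A B"
  shows "int p dvd ent2 X \<and> int p dvd ent3 X \<and> int p dvd ent1 X - ent4 X"
proof (rule ccontr)
  assume "\<not> ?thesis"
  then have "commute_mod p A B"
    using cross_product_dvd_trans[where P="int p" and ap="ent2 A" and aq="ent3 A" and ar="ent1 A - ent4 A"
        and xp="ent2 X" and xq="ent3 X" and xr="ent1 X - ent4 X"
        and bp="ent2 B" and bq="ent3 B" and br="ent1 B - ent4 B"] assms(1-3)
    unfolding commute_mod_iff by simp
  then show False using assms(4) by simp
qed

lemma scalar_commute_mod:
  assumes "int p dvd ent2 A" "int p dvd ent3 A" "int p dvd ent1 A - ent4 A"
  shows "commute_mod p A B"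
  unfolding commute_mod_iff using assms by (simp add: dvd_diff dvd_mult2 dvd_mult)

lemma reduced_scalar:
  assumes "mat_mod p X = X" "int p dvd ent2 X" "int p dvd ent3 X" "int p dvd ent1 X - ent4 X"
  shows "X = (ent1 X, 0, 0, ent1 X)"
proof -
  have reduced: "e (mat_mod p X) = e X" for e using assms(1) by simp
  have "ent2 X = 0" using reduced[of ent2] assms(2) by (simp add: dvd_eq_mod_eq_0)
  moreover have "ent3 X = 0" using reduced[of ent3] assms(3) by (simp add: dvd_eq_mod_eq_0)
  moreover have "ent4 X = ent1 X"
    using reduced[of ent1] reduced[of ent4] assms(4) by (simp add: mod_eq_dvd_iff[symmetric])
  ultimately show ?thesis by (simp add: mat2_eq_iff)
qed

definition Q8 :: "mat2 set" where
  "Q8 = carrier quaternion_group"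

definition Q8_list :: "mat2 list" where
  "Q8_list = [(1,0,0,0), (-1,0,0,0), (0,1,0,0), (0,-1,0,0),
              (0,0,1,0), (0,0,-1,0), (0,0,0,1), (0,0,0,-1)]"

lemma Q8_set: "Q8 = set Q8_list"
  by (simp add: Q8_def Q8_list_def quaternion_group_def)

abbreviation "qone \<equiv> ((1,0,0,0) :: mat2)"
abbreviation "qneg \<equiv> ((-1,0,0,0) :: mat2)"
abbreviation "qi \<equiv> ((0,1,0,0) :: mat2)"
abbreviation "qj \<equiv> ((0,0,1,0) :: mat2)"
abbreviation "qk \<equiv> ((0,0,0,1) :: mat2)"

lemma Q8_elems:
  "qone \<in> Q8" "qneg \<in> Q8" "qi \<in> Q8" "qj \<in> Q8" "qk \<in> Q8"
  "(0,-1,0,0) \<in> Q8" "(0,0,-1,0) \<in> Q8" "(0,0,0,-1) \<in> Q8"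
  by (simp_all add: Q8_set Q8_list_def)

lemma Q8_cases:
  assumes "q \<in> Q8"
  obtains "q = qone" | "q = qneg" | "q = qi" | "q = ham_mult qneg qi" | "q = qj" | "q = ham_mult qneg qj"
    | "q = qk" | "q = ham_mult qneg qk"
  using assms by (auto simp: Q8_set Q8_list_def ham_mult_def)

lemma ham_mult_qneg: "ham_mult qneg x = mat_scale (-1) x"
  by (cases x) (simp add: ham_mult_def mat_scale_def)

definition qconj :: "mat2 \<Rightarrow> mat2" where
  "qconj w = (ent1 w, - ent2 w, - ent3 w, - ent4 w)"

definition qnorm :: "mat2 \<Rightarrow> int" where
  "qnorm w = ent1 w * ent1 w + ent2 w * ent2 w + ent3 w * ent3 w + ent4 w * ent4 w"

lemma ham_mult_qconj:
  "ham_mult x (qconj x) = (qnorm x, 0, 0, 0)" "ham_mult (qconj x) x = (qnorm x, 0, 0, 0)"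
  by (cases x; simp add: ham_mult_def qconj_def qnorm_def algebra_simps)+

lemma qnorm_qconj: "qnorm (qconj x) = qnorm x"
  by (simp add: qnorm_def qconj_def)

section \<open>Matrices satisfying the quaternion relations\<close>

definition quat_rels :: "nat \<Rightarrow> mat2 \<Rightarrow> mat2 \<Rightarrow> mat2 \<Rightarrow> bool" where
  "quat_rels p I J K \<longleftrightarrow>
     mat_mod p (mat_mul I I) = mat_mod p (mat_scale (-1) id2) \<and>
     mat_mod p (mat_mul J J) = mat_mod p (mat_scale (-1) id2) \<and>
     mat_mod p (mat_mul K K) = mat_mod p (mat_scale (-1) id2) \<and>
     mat_mod p (mat_mul I J) = mat_mod p K \<and> mat_mod p (mat_mul J I) = mat_mod p (mat_scale (-1) K) \<and>
     mat_mod p (mat_mul J K) = mat_mod p I \<and> mat_mod p (mat_mul K J) = mat_mod p (mat_scale (-1) I) \<and>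
     mat_mod p (mat_mul K I) = mat_mod p J \<and> mat_mod p (mat_mul I K) = mat_mod p (mat_scale (-1) J)"

definition quat_mat :: "mat2 \<Rightarrow> mat2 \<Rightarrow> mat2 \<Rightarrow> mat2 \<Rightarrow> mat2" where
  "quat_mat I J K x = mat_add (mat_add (mat_scale (ent1 x) id2) (mat_scale (ent2 x) I))
                              (mat_add (mat_scale (ent3 x) J) (mat_scale (ent4 x) K))"

lemma quat_mat_mult:
  assumes "quat_rels p I J K"
  shows "mat_mod p (mat_mul (quat_mat I J K x) (quat_mat I J K y)) = mat_mod p (quat_mat I J K (ham_mult x y))"
proof -
  obtain x1 x2 x3 x4 where x: "x = (x1, x2, x3, x4)" by (cases x) auto
  obtain y1 y2 y3 y4 where y: "y = (y1, y2, y3, y4)" by (cases y) auto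
  let ?D = "\<lambda>A B. mat_add A (mat_scale (-1) B)"
  let ?m = "mat_scale (-1) id2"
  have dvd: "int p dvd e (?D (mat_mul A B) C)"
    if "mat_mod p (mat_mul A B) = mat_mod p C" "e = ent1 \<or> e = ent2 \<or> e = ent3 \<or> e = ent4" for A B C e
    using that unfolding mat_mod_eq_iff_dvd by auto
  \<comment> \<open>the defect of multiplicativity is a combination of the defects of the nine relations\<close>
  let ?R = "\<lambda>e. x2*y2 * e (?D (mat_mul I I) ?m) + x3*y3 * e (?D (mat_mul J J) ?m)
    + x4*y4 * e (?D (mat_mul K K) ?m)
    + x2*y3 * e (?D (mat_mul I J) K) + x3*y2 * e (?D (mat_mul J I) (mat_scale (-1) K))
    + x3*y4 * e (?D (mat_mul J K) I) + x4*y3 * e (?D (mat_mul K J) (mat_scale (-1) I))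
    + x4*y2 * e (?D (mat_mul K I) J) + x2*y4 * e (?D (mat_mul I K) (mat_scale (-1) J))"
  have "e (mat_mul (quat_mat I J K x) (quat_mat I J K y)) - e (quat_mat I J K (ham_mult x y)) = ?R e"
    if "e = ent1 \<or> e = ent2 \<or> e = ent3 \<or> e = ent4" for e
    using that by (auto simp: x y quat_mat_def ham_mult_def algebra_simps)
  moreover have "int p dvd ?R e" if e: "e = ent1 \<or> e = ent2 \<or> e = ent3 \<or> e = ent4" for e
    using assms unfolding quat_rels_def by (intro dvd_add dvd_mult dvd[OF _ e]; simp)
  ultimately show ?thesis unfolding mat_mod_eq_iff_dvd by metis
qed

lemma quat_mat_scale: "quat_mat I J K (mat_scale c x) = mat_scale c (quat_mat I J K x)"
  by (simp add: quat_mat_def mat2_eq_iff algebra_simps)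

lemma quat_mat_basis:
  "quat_mat I J K qone = id2" "quat_mat I J K qi = I" "quat_mat I J K qj = J" "quat_mat I J K qk = K"
  by (simp_all add: quat_mat_def mat2_eq_iff)

lemma quat_mat_real: "quat_mat I J K (c, 0, 0, 0) = mat_scale c id2"
  by (simp add: quat_mat_def mat2_eq_iff)

lemma quat_mat_qconj: "quat_mat (mat_scale (-1) I) (mat_scale (-1) J) (mat_scale (-1) K) x = quat_mat I J K (qconj x)"
  by (simp add: quat_mat_def mat2_eq_iff qconj_def)

lemma mat_adj_quat_mat: "mat_adj (quat_mat I J K x) = quat_mat (mat_adj I) (mat_adj J) (mat_adj K) x"
  by (simp add: mat2_eq_iff quat_mat_def mat_adj_def)

lemma mat_adj_traceless: "int p dvd mat_trace A \<Longrightarrow> mat_mod p (mat_adj A) = mat_mod p (mat_scale (-1) A)"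
  unfolding mat_mod_eq_iff_dvd by (simp add: mat_trace_def mat_adj_def add.commute)

lemma quat_mat_mod_cong:
  assumes "mat_mod p I = mat_mod p I'" "mat_mod p J = mat_mod p J'" "mat_mod p K = mat_mod p K'"
  shows "mat_mod p (quat_mat I J K x) = mat_mod p (quat_mat I' J' K' x)"
proof -
  have "e (quat_mat I J K x) - e (quat_mat I' J' K' x) = ent2 x * (e I - e I') + ent3 x * (e J - e J') + ent4 x * (e K - e K')"
    if "e = ent1 \<or> e = ent2 \<or> e = ent3 \<or> e = ent4" for e
    using that by (auto simp: quat_mat_def algebra_simps)
  moreover have "int p dvd e I - e I'" "int p dvd e J - e J'" "int p dvd e K - e K'"
    if "e = ent1 \<or> e = ent2 \<or> e = ent3 \<or> e = ent4" for e
    using assms that unfolding mat_mod_eq_iff_dvd by auto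
  ultimately show ?thesis unfolding mat_mod_eq_iff_dvd by (metis dvd_add dvd_mult)
qed

text \<open>For traceless \<open>I, J, K\<close> the adjugate of \<open>quat_mat I J K x\<close> is the image of the conjugate
  quaternion, so the determinant is the quaternion norm.\<close>

lemma det_quat_mat:
  assumes "quat_rels p I J K" "int p dvd mat_trace I" "int p dvd mat_trace J" "int p dvd mat_trace K"
  shows "det_int (quat_mat I J K x) mod int p = qnorm x mod int p"
proof -
  have "mat_mod p (mat_adj (quat_mat I J K x)) = mat_mod p (quat_mat I J K (qconj x))"
    unfolding mat_adj_quat_mat quat_mat_qconj[symmetric]
    by (rule quat_mat_mod_cong; rule mat_adj_traceless; fact)
  then have "mat_mod p (mat_mul (quat_mat I J K x) (mat_adj (quat_mat I J K x)))
      = mat_mod p (mat_mul (quat_mat I J K x) (quat_mat I J K (qconj x)))"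
    by (metis mat_mod_mat_mul_right)
  also have "\<dots> = mat_mod p (mat_scale (qnorm x) id2)"
    using quat_mat_mult[OF assms(1)] by (simp add: ham_mult_qconj quat_mat_real)
  finally show ?thesis
    unfolding mat_mul_adj by (metis ent_mat_mod(1) ent_mat_scale(1) ent_simps(1) mult_1_right)
qed

text \<open>By Cayley--Hamilton \<open>A\<^sup>2 = tr A \<cdot> A - det A\<close>, so a square root of \<open>-1\<close> with nonzero trace
  is scalar and commutes with everything.\<close>

lemma traceless_if_square_neg_one:
  assumes "prime p" "mat_mod p (mat_mul A A) = mat_mod p (mat_scale (-1) id2)" "\<not> commute_mod p A B"
  shows "int p dvd mat_trace A"
proof (rule ccontr)
  assume trace: "\<not> int p dvd mat_trace A"
  have "mat_mod p (mat_add (mat_scale (mat_trace A) A) (mat_scale (- det_int A) id2))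
      = mat_mod p (mat_scale (-1) id2)"
    using assms(2) cayley_hamilton[of A] by simp
  then have "int p dvd mat_trace A * ent2 A" "int p dvd mat_trace A * ent3 A"
    "int p dvd mat_trace A * ent1 A - det_int A + 1" "int p dvd mat_trace A * ent4 A - det_int A + 1"
    unfolding mat_mod_eq_iff_dvd by simp_all
  moreover have "(mat_trace A * ent1 A - det_int A + 1) - (mat_trace A * ent4 A - det_int A + 1)
      = mat_trace A * (ent1 A - ent4 A)"
    by (simp add: algebra_simps)
  ultimately have "int p dvd ent2 A" "int p dvd ent3 A" "int p dvd ent1 A - ent4 A"
    using trace assms(1) prime_dvd_multD[of "int p"] by (metis dvd_diff prime_nat_int_transfer)+
  then have "commute_mod p A B" by (rule scalar_commute_mod)
  then show False using assms(3) by simp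
qed

section \<open>The automorphisms of \<open>Q\<^sub>8\<close> as rotations\<close>

definition qrot :: "mat2 \<Rightarrow> mat2 \<Rightarrow> mat2" where
  "qrot w q = (let r = ham_mult (ham_mult w q) (qconj w)
               in (ent1 r div qnorm w, ent2 r div qnorm w, ent3 r div qnorm w, ent4 r div qnorm w))"

text \<open>Up to the factors \<open>\<surd>2\<close> and \<open>2\<close> removing denominators, these are representatives modulo \<open>\<plusminus>1\<close>
  of the binary octahedral group, so the rotations \<open>q \<mapsto> w q w\<^sup>-\<^sup>1\<close> run through \<open>Aut(Q\<^sub>8) \<cong> S\<^sub>4\<close>.
  Those of norm 2 are the odd permutations.\<close>

definition rot_reps :: "mat2 list" where
  "rot_reps = [(1,0,0,0), (0,1,0,0), (0,0,1,0), (0,0,0,1),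
    (1,1,0,0), (1,-1,0,0), (1,0,1,0), (1,0,-1,0), (1,0,0,1), (1,0,0,-1),
    (0,1,1,0), (0,1,-1,0), (0,1,0,1), (0,1,0,-1), (0,0,1,1), (0,0,1,-1),
    (1,1,1,1), (1,1,1,-1), (1,1,-1,1), (1,1,-1,-1), (1,-1,1,1), (1,-1,1,-1), (1,-1,-1,1), (1,-1,-1,-1)]"

text \<open>The map of \<open>Q\<^sub>8\<close> sending \<open>i, j\<close> to \<open>u, v\<close>; an automorphism is determined by this pair, its key.\<close>

definition q8_map :: "mat2 \<Rightarrow> mat2 \<Rightarrow> mat2 \<Rightarrow> mat2" where
  "q8_map u v q =
     (if q = qone then qone else if q = qneg then qneg
      else if q = qi then u else if q = (0,-1,0,0) then ham_mult qneg u
      else if q = qj then v else if q = (0,0,-1,0) then ham_mult qneg v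
      else if q = qk then ham_mult u v else ham_mult qneg (ham_mult u v))"

definition rot_key :: "mat2 \<Rightarrow> mat2 \<times> mat2" where
  "rot_key w = (qrot w qi, qrot w qj)"

definition key_comp :: "mat2 \<times> mat2 \<Rightarrow> mat2 \<times> mat2 \<Rightarrow> mat2 \<times> mat2" where
  "key_comp a b = (q8_map (fst a) (snd a) (fst b), q8_map (fst a) (snd a) (snd b))"

definition aut_keys :: "(mat2 \<times> mat2) set" where
  "aut_keys = rot_key ` set rot_reps"

definition even_aut_keys :: "(mat2 \<times> mat2) set" where
  "even_aut_keys = rot_key ` set (filter (\<lambda>w. qnorm w \<noteq> 2) rot_reps)"

lemma Q8_mult_closed: "x \<in> Q8 \<Longrightarrow> y \<in> Q8 \<Longrightarrow> ham_mult x y \<in> Q8"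
proof -
  have "\<forall>x\<in>Q8. \<forall>y\<in>Q8. ham_mult x y \<in> Q8" unfolding Q8_set by code_simp
  then show "x \<in> Q8 \<Longrightarrow> y \<in> Q8 \<Longrightarrow> ham_mult x y \<in> Q8" by blast
qed

lemma q8_map_Q8: "u \<in> Q8 \<Longrightarrow> v \<in> Q8 \<Longrightarrow> q \<in> Q8 \<Longrightarrow> q8_map u v q \<in> Q8"
  using Q8_mult_closed Q8_elems by (simp add: q8_map_def)

lemma Q8_square_one: "\<forall>x\<in>Q8. ham_mult x x = qone \<longrightarrow> x = qone \<or> x = qneg"
  unfolding Q8_set by code_simp

lemma Q8_generating_pairs:
  "\<forall>u\<in>Q8. \<forall>v\<in>Q8. ham_mult u u = qneg \<and> ham_mult v v = qneg \<and> v \<noteq> u \<and> v \<noteq> ham_mult qneg u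
     \<longrightarrow> (u, v) \<in> aut_keys"
  unfolding Q8_set aut_keys_def by code_simp

lemma qrot_Q8:
  "\<forall>w\<in>set rot_reps. \<forall>q\<in>Q8. ham_mult (ham_mult w q) (qconj w) = mat_scale (qnorm w) (qrot w q)
     \<and> qrot w q \<in> Q8"
  unfolding Q8_set by code_simp

lemma qrot_surj: "\<forall>w\<in>set rot_reps. \<forall>q\<in>Q8. \<exists>q'\<in>Q8. qrot w q' = q"
  unfolding Q8_set by code_simp

lemma qnorm_rot_reps: "\<forall>w\<in>set rot_reps. qnorm w = 1 \<or> qnorm w = 2 \<or> qnorm w = 4"
  by code_simp

lemma card_aut_keys: "card aut_keys = 24"
proof -
  have "distinct (map rot_key rot_reps) \<and> length rot_reps = 24" by code_simp
  then show ?thesis using distinct_card[of "map rot_key rot_reps"] by (simp add: aut_keys_def)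
qed

lemma card_even_aut_keys: "card even_aut_keys = 12"
proof -
  have "distinct (map rot_key (filter (\<lambda>w. qnorm w \<noteq> 2) rot_reps))
      \<and> length (filter (\<lambda>w. qnorm w \<noteq> 2) rot_reps) = 12"
    by code_simp
  then show ?thesis
    using distinct_card[of "map rot_key (filter (\<lambda>w. qnorm w \<noteq> 2) rot_reps)"]
    by (simp add: even_aut_keys_def)
qed

lemma rot_key_in_even_aut_keys: "\<forall>w\<in>set rot_reps. qnorm w = 2 \<longrightarrow> rot_key w \<notin> even_aut_keys"
  unfolding even_aut_keys_def by code_simp

lemma even_aut_keys_squares: "\<forall>a\<in>even_aut_keys. \<exists>b\<in>aut_keys. key_comp b b = a"
  unfolding even_aut_keys_def aut_keys_def by code_simp

text \<open>The four diagonals \<open>\<plusminus>(i \<plusminus> j \<plusminus> k)\<close> of the cube spanned by \<open>i, j, k\<close>; the automorphism with key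
  \<open>(u, v)\<close> acts on pure quaternions linearly by \<open>i \<mapsto> u, j \<mapsto> v, k \<mapsto> u v\<close> and permutes them.\<close>

definition diagonal :: "nat \<Rightarrow> mat2" where
  "diagonal m = (if m = 1 then (0,1,1,1) else if m = 2 then (0,1,-1,-1)
                 else if m = 3 then (0,-1,1,-1) else (0,-1,-1,1))"

definition key_act :: "mat2 \<times> mat2 \<Rightarrow> mat2 \<Rightarrow> mat2" where
  "key_act a x = mat_add (mat_add (mat_scale (ent2 x) (fst a)) (mat_scale (ent3 x) (snd a)))
                         (mat_scale (ent4 x) (ham_mult (fst a) (snd a)))"

definition diagonal_index :: "mat2 \<Rightarrow> nat" where
  "diagonal_index y =
     (if y = diagonal 1 \<or> y = mat_scale (-1) (diagonal 1) then 1
      else if y = diagonal 2 \<or> y = mat_scale (-1) (diagonal 2) then 2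
      else if y = diagonal 3 \<or> y = mat_scale (-1) (diagonal 3) then 3 else 4)"

definition diagonal_perm :: "mat2 \<times> mat2 \<Rightarrow> nat list" where
  "diagonal_perm a = map (\<lambda>m. diagonal_index (key_act a (diagonal m))) [1, 2, 3, 4]"

definition list_comp :: "nat list \<Rightarrow> nat list \<Rightarrow> nat list" where
  "list_comp L1 L2 = map (\<lambda>m. L1 ! (m - 1)) L2"

lemma diagonal_perm_bij: "a \<in> aut_keys \<Longrightarrow> set (diagonal_perm a) = {1..4} \<and> distinct (diagonal_perm a)"
proof -
  have "\<forall>a\<in>aut_keys. set (diagonal_perm a) = {1,2,3,4} \<and> distinct (diagonal_perm a)"
    unfolding aut_keys_def by code_simp
  moreover have "{1..4::nat} = {1,2,3,4}" by auto
  ultimately show "a \<in> aut_keys \<Longrightarrow> ?thesis" by simp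
qed

lemma length_diagonal_perm: "length (diagonal_perm a) = 4"
  by (simp add: diagonal_perm_def)

lemma key_comp_diagonal_perm:
  "\<forall>a\<in>aut_keys. \<forall>b\<in>aut_keys. key_comp a b \<in> aut_keys
     \<and> diagonal_perm (key_comp a b) = list_comp (diagonal_perm a) (diagonal_perm b)"
  unfolding aut_keys_def by code_simp

lemma diagonal_perm_inj: "\<forall>a\<in>aut_keys. \<forall>b\<in>aut_keys. diagonal_perm a = diagonal_perm b \<longrightarrow> a = b"
  unfolding aut_keys_def by code_simp

definition perm_of_list :: "nat list \<Rightarrow> nat \<Rightarrow> nat" where
  "perm_of_list L i = (if 1 \<le> i \<and> i \<le> length L then L ! (i - 1) else i)"

lemma perm_of_list_permutes:
  assumes "set L = {1..length L}" "distinct L"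
  shows "perm_of_list L permutes {1..length L}"
proof (rule bij_imp_permutes)
  have "perm_of_list L ` {1..length L} = set L"
  proof safe
    fix i assume "i \<in> {1..length L}"
    then show "perm_of_list L i \<in> set L" by (auto simp: perm_of_list_def intro!: nth_mem)
  next
    fix x assume "x \<in> set L"
    then obtain k where "k < length L" "x = L ! k" by (auto simp: in_set_conv_nth)
    then show "x \<in> perm_of_list L ` {1..length L}"
      by (intro image_eqI[of _ _ "k + 1"]) (simp_all add: perm_of_list_def)
  qed
  moreover have "inj_on (perm_of_list L) {1..length L}"
    using assms(2) by (auto simp: inj_on_def perm_of_list_def nth_eq_iff_index_eq)
  ultimately show "bij_betw (perm_of_list L) {1..length L} {1..length L}"
    using assms(1) by (simp add: bij_betw_def)
qed (auto simp: perm_of_list_def)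

lemma perm_of_list_comp:
  assumes "set L2 = {1..length L1}" "length L2 = length L1"
  shows "perm_of_list (list_comp L1 L2) = perm_of_list L1 \<circ> perm_of_list L2"
proof
  fix i
  show "perm_of_list (list_comp L1 L2) i = (perm_of_list L1 \<circ> perm_of_list L2) i"
  proof (cases "1 \<le> i \<and> i \<le> length L2")
    case True
    then have "i - 1 < length L2" by auto
    then have "L2 ! (i - 1) \<in> {1..length L1}" using assms nth_mem by blast
    then show ?thesis using True \<open>i - 1 < length L2\<close> by (simp add: perm_of_list_def list_comp_def)
  qed (use assms(2) in \<open>auto simp: perm_of_list_def list_comp_def\<close>)
qed

lemma perm_of_list_inj:
  assumes "length L1 = length L2" "perm_of_list L1 = perm_of_list L2"
  shows "L1 = L2"
proof (rule nth_equalityI)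
  fix i assume "i < length L1"
  then show "L1 ! i = L2 ! i"
    using fun_cong[OF assms(2), of "i + 1"] assms(1) by (simp add: perm_of_list_def)
qed (fact assms(1))

lemma (in group) normalizer_iff:
  assumes "H \<subseteq> carrier G"
  shows "g \<in> normalizer G H \<longleftrightarrow> g \<in> carrier G \<and> (\<lambda>h. g \<otimes> h \<otimes> inv g) ` H = H"
proof -
  have "g <# H #> inv g = (\<lambda>h. g \<otimes> h \<otimes> inv g) ` H"
    unfolding l_coset_def r_coset_def by auto
  then show ?thesis using assms unfolding normalizer_def stabilizer_def by auto
qed

lemma AutoGroup_carrier [simp]: "carrier (AutoGroup G) = auto G"
  by (simp add: AutoGroup_def)

lemma AutoGroup_one: "\<one>\<^bsub>AutoGroup G\<^esub> = (\<lambda>x\<in>carrier G. x)"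
  by (simp add: AutoGroup_def BijGroup_def)

lemma AutoGroup_mult: "\<alpha> \<in> auto G \<Longrightarrow> \<beta> \<in> auto G \<Longrightarrow> \<alpha> \<otimes>\<^bsub>AutoGroup G\<^esub> \<beta> = compose (carrier G) \<alpha> \<beta>"
  by (simp add: AutoGroup_def BijGroup_def auto_def)

lemma (in group) conj_aut_apply: "h \<in> H \<Longrightarrow> conj_aut G H g h = g \<otimes> h \<otimes> inv g"
  by (simp add: conj_aut_def)

lemma (in group) conj_aut_in_auto:
  assumes H: "subgroup H G" and g: "g \<in> normalizer G H"
  shows "conj_aut G H g \<in> auto (G\<lparr>carrier := H\<rparr>)"
proof -
  have H_sub: "H \<subseteq> carrier G" using H subgroup.subset by blast
  have gG: "g \<in> carrier G" and img: "(\<lambda>h. g \<otimes> h \<otimes> inv g) ` H = H"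
    using g normalizer_iff[OF H_sub] by auto
  have "conj_aut G H g \<in> hom (G\<lparr>carrier := H\<rparr>) (G\<lparr>carrier := H\<rparr>)"
  proof (rule homI)
    fix x assume "x \<in> carrier (G\<lparr>carrier := H\<rparr>)"
    then show "conj_aut G H g x \<in> carrier (G\<lparr>carrier := H\<rparr>)" using img by (auto simp: conj_aut_apply)
  next
    fix x y assume "x \<in> carrier (G\<lparr>carrier := H\<rparr>)" "y \<in> carrier (G\<lparr>carrier := H\<rparr>)"
    then have xy: "x \<in> H" "y \<in> H" "x \<in> carrier G" "y \<in> carrier G" using H_sub by auto
    have "g \<otimes> (x \<otimes> y) \<otimes> inv g = (g \<otimes> x \<otimes> inv g) \<otimes> (g \<otimes> y \<otimes> inv g)"
      using xy gG by (simp add: m_assoc) (simp add: m_assoc[symmetric])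
    then show "conj_aut G H g (x \<otimes>\<^bsub>G\<lparr>carrier := H\<rparr>\<^esub> y)
        = conj_aut G H g x \<otimes>\<^bsub>G\<lparr>carrier := H\<rparr>\<^esub> conj_aut G H g y"
      using xy H by (simp add: conj_aut_apply subgroup.m_closed)
  qed
  moreover have "inj_on (conj_aut G H g) H"
  proof
    fix x y assume "x \<in> H" "y \<in> H" "conj_aut G H g x = conj_aut G H g y"
    moreover from this have "x \<in> carrier G" "y \<in> carrier G" using H_sub by auto
    ultimately show "x = y" using gG by (simp add: conj_aut_apply)
  qed
  moreover have "conj_aut G H g ` H = H"
    using img by (auto simp: conj_aut_apply image_def)
  ultimately show ?thesis by (simp add: auto_def Bij_def bij_betw_def conj_aut_def)
qed

lemma (in group) conj_aut_mult:
  assumes H: "subgroup H G" and g: "g \<in> normalizer G H" "g' \<in> normalizer G H"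
  shows "conj_aut G H (g \<otimes> g') = compose H (conj_aut G H g) (conj_aut G H g')"
proof
  fix h
  have H_sub: "H \<subseteq> carrier G" using H subgroup.subset by blast
  have gG: "g \<in> carrier G" "g' \<in> carrier G" and conj_in: "g' \<otimes> h \<otimes> inv g' \<in> H" if "h \<in> H"
    using g normalizer_iff[OF H_sub] that by auto
  show "conj_aut G H (g \<otimes> g') h = compose H (conj_aut G H g) (conj_aut G H g') h"
    using gG conj_in H_sub
    by (cases "h \<in> H") (auto simp: conj_aut_def compose_def inv_mult_group m_assoc)
qed

lemma (in group) conj_aut_hom:
  assumes "subgroup H G"
  shows "conj_aut G H \<in> hom (G\<lparr>carrier := normalizer G H\<rparr>) (AutoGroup (G\<lparr>carrier := H\<rparr>))"
proof (rule homI)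
  fix g assume "g \<in> carrier (G\<lparr>carrier := normalizer G H\<rparr>)"
  then show "conj_aut G H g \<in> carrier (AutoGroup (G\<lparr>carrier := H\<rparr>))"
    using conj_aut_in_auto[OF assms] by simp
next
  fix g g' assume "g \<in> carrier (G\<lparr>carrier := normalizer G H\<rparr>)" "g' \<in> carrier (G\<lparr>carrier := normalizer G H\<rparr>)"
  then show "conj_aut G H (g \<otimes>\<^bsub>G\<lparr>carrier := normalizer G H\<rparr>\<^esub> g')
      = conj_aut G H g \<otimes>\<^bsub>AutoGroup (G\<lparr>carrier := H\<rparr>)\<^esub> conj_aut G H g'"
    using conj_aut_mult[OF assms] conj_aut_in_auto[OF assms] by (simp add: AutoGroup_mult)
qed

lemma (in group) conj_aut_eq_id_iff:
  assumes "H \<subseteq> carrier G" "g \<in> carrier G"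
  shows "conj_aut G H g = (\<lambda>x\<in>H. x) \<longleftrightarrow> (\<forall>h\<in>H. g \<otimes> h = h \<otimes> g)"
proof -
  have "g \<otimes> h \<otimes> inv g = h \<longleftrightarrow> g \<otimes> h = h \<otimes> g" if "h \<in> H" for h
    using assms that by (metis inv_solve_right m_closed subsetD inv_closed)
  then show ?thesis by (auto simp: conj_aut_def restrict_def fun_eq_iff)
qed

lemma (in group) conj_eq_imp_commute:
  assumes "x \<in> carrier G" "g \<in> carrier G" "h \<in> carrier G" "g \<otimes> h \<otimes> inv g = x \<otimes> h \<otimes> inv x"
  shows "(inv x \<otimes> g) \<otimes> h = h \<otimes> (inv x \<otimes> g)"
proof -
  have "(inv x \<otimes> g) \<otimes> h = inv x \<otimes> (g \<otimes> h \<otimes> inv g) \<otimes> g" using assms(1-3) by (simp add: m_assoc)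
  also have "\<dots> = h \<otimes> (inv x \<otimes> g)" using assms by (simp add: m_assoc) (simp add: m_assoc[symmetric])
  finally show ?thesis .
qed

lemma (in group) square_in_index_two_subgroup:
  assumes fin: "finite (carrier G)" and K: "subgroup K G" and card: "card (carrier G) = 2 * card K"
    and b: "b \<in> carrier G"
  shows "b \<otimes> b \<in> K"
proof (rule ccontr)
  assume b2: "b \<otimes> b \<notin> K"
  have K_sub: "K \<subseteq> carrier G" using K subgroup.subset by blast
  have "b \<notin> K" using b2 K subgroup.m_closed by fastforce
  define L where "L = (\<lambda>k. b \<otimes> k) ` K"
  have "K \<inter> L = {}"
  proof (rule ccontr)
    assume "K \<inter> L \<noteq> {}"
    then obtain k where k: "k \<in> K" "b \<otimes> k \<in> K" unfolding L_def by blast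
    then have "b \<otimes> k \<otimes> inv k \<in> K" using K by (simp add: subgroup.m_closed subgroup.m_inv_closed)
    then show False using \<open>b \<notin> K\<close> k(1) K_sub b by (simp add: m_assoc subsetD)
  qed
  moreover have "card L = card K"
    unfolding L_def using K_sub b by (intro card_image) (auto simp: inj_on_def subsetD)
  moreover have "finite K" using fin K_sub finite_subset by blast
  moreover have "L \<subseteq> carrier G" using K_sub b L_def by auto
  ultimately have "K \<union> L = carrier G"
    using card card_subset_eq[OF fin] K_sub by (simp add: card_Un_disjoint L_def)
  then obtain k where "k \<in> K" "b \<otimes> b = b \<otimes> k" using b2 b unfolding L_def by blast
  then show False using \<open>b \<notin> K\<close> b K_sub by (simp add: subsetD)
qed

lemma QuadRes_mod: "QuadRes q (x mod q) \<longleftrightarrow> QuadRes q x"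
  by (simp add: QuadRes_def cong_def)

lemma QuadRes_square: "QuadRes q (a * a)"
  unfolding QuadRes_def by (rule exI[of _ a]) (simp add: power2_eq_square)

lemma QuadRes_mult_square:
  assumes "prime q" "\<not> q dvd a"
  shows "QuadRes q (n * (a * a)) \<longleftrightarrow> QuadRes q n"
proof
  obtain b where b: "[a * b = 1] (mod q)" using inverse_mod_prime_exists[OF assms] by blast
  assume "QuadRes q (n * (a * a))"
  then obtain y where "[y^2 = n * (a * a)] (mod q)" by (auto simp: QuadRes_def)
  then have "[y^2 * (b * b) = n * (a * a) * (b * b)] (mod q)" by (rule cong_scalar_right)
  moreover have "(y * b)^2 = y^2 * (b * b)" "n * (a * a) * (b * b) = n * ((a * b) * (a * b))"
    by (simp_all add: power2_eq_square algebra_simps)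
  ultimately have "[(y * b)^2 = n * ((a * b) * (a * b))] (mod q)" by simp
  moreover have "[n * ((a * b) * (a * b)) = n] (mod q)" using cong_mult[OF cong_refl cong_mult[OF b b]] by simp
  ultimately show "QuadRes q n" unfolding QuadRes_def using cong_trans by blast
next
  assume "QuadRes q n"
  then obtain y where "[y^2 = n] (mod q)" by (auto simp: QuadRes_def)
  then have "[y^2 * (a * a) = n * (a * a)] (mod q)" by (rule cong_scalar_right)
  moreover have "(y * a)^2 = y^2 * (a * a)" by (simp add: power2_eq_square algebra_simps)
  ultimately have "[(y * a)^2 = n * (a * a)] (mod q)" by simp
  then show "QuadRes q (n * (a * a))" unfolding QuadRes_def by blast
qed

section \<open>A subgroup of \<open>GL\<^sub>2(\<int>/p)\<close> isomorphic to \<open>Q\<^sub>8\<close>\<close>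

locale quaternion_subgroup =
  fixes p :: nat and H :: "mat2 set" and \<psi> :: "mat2 \<Rightarrow> mat2"
  assumes prime: "prime p" and p_ge_3: "p \<ge> 3" and subgroup: "subgroup H (GL2 p)"
    and iso: "\<psi> \<in> iso ((GL2 p)\<lparr>carrier := H\<rparr>) quaternion_group"
begin

abbreviation "G \<equiv> GL2 p"
abbreviation "HG \<equiv> G\<lparr>carrier := H\<rparr>"
abbreviation "N \<equiv> normalizer G H"
abbreviation "NG \<equiv> G\<lparr>carrier := N\<rparr>"
abbreviation "A \<equiv> AutoGroup HG"
abbreviation "cj \<equiv> conj_aut G H"

interpretation G: group G
  using group_GL2[OF prime] .

lemma p_pos: "p > 0"
  using p_ge_3 by simp

lemma prime_int: "prime (int p)"
  using prime by simp

lemma H_subset: "H \<subseteq> carrier G"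
  using subgroup subgroup.subset by blast

lemma H_mult_closed: "x \<in> H \<Longrightarrow> y \<in> H \<Longrightarrow> mat2_mult p x y \<in> H"
  using subgroup subgroup.m_closed by fastforce

lemma mat_mod_carrier: "x \<in> carrier G \<Longrightarrow> mat_mod p x = x"
  using GL2_carrier_iff p_pos by simp

lemma det_int_carrier: "x \<in> carrier G \<Longrightarrow> \<not> int p dvd det_int x"
  using GL2_carrier_iff p_pos by simp

definition \<phi> :: "mat2 \<Rightarrow> mat2" where
  "\<phi> = inv_into H \<psi>"

lemma \<psi>_mult: "x \<in> H \<Longrightarrow> y \<in> H \<Longrightarrow> \<psi> (mat2_mult p x y) = ham_mult (\<psi> x) (\<psi> y)"
  using iso by (simp add: iso_def hom_def quaternion_group_def)

lemma \<psi>_bij: "bij_betw \<psi> H Q8"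
  using iso by (simp add: iso_def Q8_def)

lemma \<psi>_in: "h \<in> H \<Longrightarrow> \<psi> h \<in> Q8"
  using \<psi>_bij bij_betwE by blast

lemma \<phi>_in: "q \<in> Q8 \<Longrightarrow> \<phi> q \<in> H"
  unfolding \<phi>_def using \<psi>_bij bij_betwE bij_betw_inv_into by blast

lemma \<psi>_\<phi>: "q \<in> Q8 \<Longrightarrow> \<psi> (\<phi> q) = q"
  unfolding \<phi>_def using \<psi>_bij by (simp add: bij_betw_def f_inv_into_f)

lemma \<phi>_\<psi>: "h \<in> H \<Longrightarrow> \<phi> (\<psi> h) = h"
  unfolding \<phi>_def using \<psi>_bij by (simp add: bij_betw_def inv_into_f_f)

lemma \<phi>_inj: "x \<in> Q8 \<Longrightarrow> y \<in> Q8 \<Longrightarrow> \<phi> x = \<phi> y \<Longrightarrow> x = y"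
  by (metis \<psi>_\<phi>)

lemma \<phi>_mult: "x \<in> Q8 \<Longrightarrow> y \<in> Q8 \<Longrightarrow> \<phi> (ham_mult x y) = mat2_mult p (\<phi> x) (\<phi> y)"
  by (metis \<phi>_\<psi> \<psi>_mult \<phi>_in \<psi>_\<phi> H_mult_closed)

lemma \<phi>_one: "\<phi> qone = id2"
proof -
  have "\<phi> qone \<otimes>\<^bsub>G\<^esub> \<phi> qone = \<phi> qone"
    using \<phi>_mult[OF Q8_elems(1) Q8_elems(1)] by (simp add: ham_mult_def)
  then show ?thesis using G.l_cancel_one[of "\<phi> qone" "\<phi> qone"] \<phi>_in[OF Q8_elems(1)] H_subset by auto
qed

definition "Z = \<phi> qneg"
definition "I = \<phi> qi"
definition "J = \<phi> qj"
definition "K = \<phi> qk"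

lemma IJKZ_in: "I \<in> H" "J \<in> H" "K \<in> H" "Z \<in> H"
  by (simp_all add: I_def J_def K_def Z_def \<phi>_in Q8_elems)

lemma not_commute_IJ: "\<not> commute_mod p I J" "\<not> commute_mod p J I" "\<not> commute_mod p K I"
proof -
  have "\<phi> qk \<noteq> \<phi> (0,0,0,-1)" "\<phi> qj \<noteq> \<phi> (0,0,-1,0)" using \<phi>_inj Q8_elems by fastforce+
  then show "\<not> commute_mod p I J" "\<not> commute_mod p J I" "\<not> commute_mod p K I"
    by (auto simp: commute_mod_def I_def J_def K_def Q8_elems ham_mult_def
        \<phi>_mult[symmetric] mat2_mult_conv[symmetric])
qed

text \<open>The unique involution of \<open>H\<close> commutes with the noncommuting \<open>I, J\<close>, so it is a scalar \<open>z\<close>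
  with \<open>z\<^sup>2 = 1 \<noteq> z\<close>.\<close>

lemma Z_eq: "Z = mat_mod p (mat_scale (-1) id2)"
proof -
  have ZG: "Z \<in> carrier G" using IJKZ_in H_subset by blast
  have "commute_mod p I Z" "commute_mod p J Z"
    by (simp_all add: commute_mod_def I_def J_def Z_def Q8_elems ham_mult_def
        \<phi>_mult[symmetric] mat2_mult_conv[symmetric])
  then have "int p dvd ent2 Z \<and> int p dvd ent3 Z \<and> int p dvd ent1 Z - ent4 Z"
    using commute_mod_scalar[OF prime _ _ not_commute_IJ(1)] by blast
  then have Z: "Z = (ent1 Z, 0, 0, ent1 Z)" using reduced_scalar mat_mod_carrier[OF ZG] by blast
  define z where "z = ent1 Z"
  have "z mod int p = z" unfolding z_def using mat_mod_carrier[OF ZG] by (metis ent_mat_mod(1))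
  then have z: "0 \<le> z" "z < int p" using mod_eq_self_iff[of "int p" z] p_pos by auto
  have "mat2_mult p Z Z = id2"
    using \<phi>_mult[OF Q8_elems(2) Q8_elems(2)] \<phi>_one by (simp add: Z_def ham_mult_def)
  then have "mat2_mult p (z, 0, 0, z) (z, 0, 0, z) = id2" using Z z_def by simp
  then have "(z * z) mod int p = 1 mod int p"
    using p_ge_3 by (simp add: mat2_mult_def)
  then have "int p dvd (z - 1) * (z + 1)" by (simp add: mod_eq_dvd_iff algebra_simps)
  then have "int p dvd z - 1 \<or> int p dvd z + 1" using prime_int prime_dvd_multD by blast
  moreover have "z \<noteq> 1"
  proof
    assume "z = 1"
    then have "\<phi> qneg = \<phi> qone" using Z \<phi>_one by (simp add: Z_def z_def)
    then show False using \<phi>_inj Q8_elems by fastforce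
  qed
  moreover have "\<not> int p dvd z - 1"
    using dvd_imp_le_int[of "z - 1" "int p"] z \<open>z \<noteq> 1\<close> p_ge_3 by auto
  ultimately have "int p dvd z + 1" by blast
  then have "z = int p - 1" using zdvd_imp_le[of "int p" "z + 1"] z by auto
  then show ?thesis using Z p_ge_3 by (simp add: z_def mat_mod_def mat_scale_def zmod_zminus1_eq_if)
qed

lemma \<phi>_mult_mod: "x \<in> Q8 \<Longrightarrow> y \<in> Q8 \<Longrightarrow> mat_mod p (mat_mul (\<phi> x) (\<phi> y)) = \<phi> (ham_mult x y)"
  by (simp add: \<phi>_mult mat2_mult_conv)

lemma \<phi>_neg:
  assumes "x \<in> Q8"
  shows "\<phi> (ham_mult qneg x) = mat_mod p (mat_scale (-1) (\<phi> x))"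
proof -
  have "\<phi> (ham_mult qneg x) = mat_mod p (mat_mul Z (\<phi> x))"
    using \<phi>_mult_mod[OF Q8_elems(2) assms] by (simp add: Z_def)
  then show ?thesis by (simp add: Z_eq mat_mul_scale mat_mul_id2)
qed

lemma quat_rels_IJK: "quat_rels p I J K"
proof -
  have reduced: "mat_mod p I = I" "mat_mod p J = J" "mat_mod p K = K"
    using IJKZ_in H_subset mat_mod_carrier by blast+
  have neg: "(0,-1,0,0) = ham_mult qneg qi" "(0,0,-1,0) = ham_mult qneg qj" "(0,0,0,-1) = ham_mult qneg qk"
    by (simp_all add: ham_mult_def)
  show ?thesis
    unfolding quat_rels_def using Q8_elems reduced
    by (simp add: I_def J_def K_def \<phi>_mult_mod ham_mult_def Z_eq[unfolded Z_def, symmetric]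
        \<phi>_neg[symmetric] neg[symmetric])
qed

lemma IJ_square: "mat2_mult p I I = Z" "mat2_mult p J J = Z"
  using \<phi>_mult[of qi qi] \<phi>_mult[of qj qj] Q8_elems by (simp_all add: I_def J_def Z_def ham_mult_def)

lemma traceless_IJK: "int p dvd mat_trace I" "int p dvd mat_trace J" "int p dvd mat_trace K"
  using quat_rels_IJK not_commute_IJ traceless_if_square_neg_one[OF prime]
  unfolding quat_rels_def by blast+

lemma \<phi>_eq_quat_mat:
  assumes "q \<in> Q8"
  shows "\<phi> q = mat_mod p (quat_mat I J K q)"
proof -
  have reduced: "mat_mod p I = I" "mat_mod p J = J" "mat_mod p K = K"
    using IJKZ_in H_subset mat_mod_carrier by blast+
  moreover have "mat_mod p id2 = id2" using p_ge_3 by (simp add: mat_mod_def)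
  ultimately
  have base: "\<phi> qone = mat_mod p (quat_mat I J K qone)" "\<phi> qi = mat_mod p (quat_mat I J K qi)"
    "\<phi> qj = mat_mod p (quat_mat I J K qj)" "\<phi> qk = mat_mod p (quat_mat I J K qk)"
    by (simp_all add: quat_mat_basis \<phi>_one I_def J_def K_def)
  have neg: "\<phi> (ham_mult qneg x) = mat_mod p (quat_mat I J K (ham_mult qneg x))"
    if "x \<in> Q8" "\<phi> x = mat_mod p (quat_mat I J K x)" for x
    unfolding \<phi>_neg[OF that(1)] that(2) by (simp add: ham_mult_qneg quat_mat_scale)
  have "qneg = ham_mult qneg qone" by (simp add: ham_mult_def)
  with assms show ?thesis
    using base neg[OF _ base(1)] neg[OF _ base(2)] neg[OF _ base(3)] neg[OF _ base(4)] Q8_elems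
    by (cases rule: Q8_cases) auto
qed

definition rot_mat :: "mat2 \<Rightarrow> mat2" where
  "rot_mat w = mat_mod p (quat_mat I J K w)"

lemma qnorm_rot_reps_not_dvd: "w \<in> set rot_reps \<Longrightarrow> \<not> int p dvd qnorm w"
proof
  assume w: "w \<in> set rot_reps" and dvd: "int p dvd qnorm w"
  have "int p dvd 2"
    using qnorm_rot_reps w dvd prime_int prime_dvd_multD[of "int p" 2 2] p_ge_3 by auto
  then show False using zdvd_imp_le[of "int p" 2] p_ge_3 by simp
qed

lemma det_rot_mat: "det_int (rot_mat w) mod int p = qnorm w mod int p"
  unfolding rot_mat_def det_int_mat_mod using det_quat_mat[OF quat_rels_IJK traceless_IJK] .

lemma rot_mat_in_carrier: "w \<in> set rot_reps \<Longrightarrow> rot_mat w \<in> carrier G"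
  using det_rot_mat[of w] qnorm_rot_reps_not_dvd[of w] p_pos
  by (simp add: GL2_carrier_iff rot_mat_def dvd_eq_mod_eq_0 det_int_mat_mod)

lemma inv_rot_mat:
  assumes w: "w \<in> set rot_reps" and c: "[c * qnorm w = 1] (mod int p)"
  shows "inv\<^bsub>G\<^esub> (rot_mat w) = mat_mod p (mat_scale c (quat_mat I J K (qconj w)))"
proof (rule G.inv_equality)
  have "mat_mod p (mat_mul (quat_mat I J K (qconj w)) (quat_mat I J K w)) = mat_mod p (mat_scale (qnorm w) id2)"
    using quat_mat_mult[OF quat_rels_IJK] by (simp add: ham_mult_qconj quat_mat_real)
  then have "mat_mod p (mat_scale c (mat_mul (quat_mat I J K (qconj w)) (quat_mat I J K w)))
      = mat_mod p (mat_scale (c * qnorm w) id2)"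
    by (metis mat_mod_mat_scale mat_scale_scale)
  then have "mat_mod p (mat_scale c (quat_mat I J K (qconj w))) \<otimes>\<^bsub>G\<^esub> rot_mat w
      = mat_mod p (mat_scale (c * qnorm w) id2)"
    by (simp add: rot_mat_def mat2_mult_conv mat_mul_scale)
  also have "\<dots> = id2" using mat_mod_scale_unit[OF c, of id2] p_ge_3 by (simp add: mat_mod_def)
  finally show "mat_mod p (mat_scale c (quat_mat I J K (qconj w))) \<otimes>\<^bsub>G\<^esub> rot_mat w = \<one>\<^bsub>G\<^esub>" by simp
  show "rot_mat w \<in> carrier G" using rot_mat_in_carrier[OF w] .
  have "\<not> int p dvd c"
  proof
    assume "int p dvd c"
    then have "is_unit (int p)" using cong_dvd_iff[OF c] by simp
    then show False using p_ge_3 by simp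
  qed
  then have "\<not> int p dvd c * c * qnorm w"
    using qnorm_rot_reps_not_dvd[OF w] prime_int by (metis prime_dvd_multD)
  moreover have "det_int (mat_scale c (quat_mat I J K (qconj w))) mod int p = (c * c * qnorm w) mod int p"
    using det_quat_mat[OF quat_rels_IJK traceless_IJK, of "qconj w"]
    by (metis det_int_mat_scale qnorm_qconj mod_mult_right_eq)
  ultimately show "mat_mod p (mat_scale c (quat_mat I J K (qconj w))) \<in> carrier G"
    using p_pos by (simp add: GL2_carrier_iff det_int_mat_mod dvd_eq_mod_eq_0)
qed

lemma conj_rot_mat:
  assumes w: "w \<in> set rot_reps" and q: "q \<in> Q8"
  shows "rot_mat w \<otimes>\<^bsub>G\<^esub> \<phi> q \<otimes>\<^bsub>G\<^esub> inv\<^bsub>G\<^esub> (rot_mat w) = \<phi> (qrot w q)"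
proof -
  obtain c where "[qnorm w * c = 1] (mod int p)"
    using inverse_mod_prime_exists[OF prime_int qnorm_rot_reps_not_dvd[OF w]] by blast
  then have c: "[c * qnorm w = 1] (mod int p)" by (simp add: mult.commute)
  have rot: "ham_mult (ham_mult w q) (qconj w) = mat_scale (qnorm w) (qrot w q)" "qrot w q \<in> Q8"
    using qrot_Q8 w q by blast+
  let ?M = "quat_mat I J K"
  have "mat_mod p (mat_mul (mat_mul (?M w) (?M q)) (?M (qconj w)))
      = mat_mod p (mat_mul (mat_mod p (mat_mul (?M w) (?M q))) (?M (qconj w)))"
    by simp
  also have "\<dots> = mat_mod p (?M (ham_mult (ham_mult w q) (qconj w)))"
    using quat_mat_mult[OF quat_rels_IJK] by (metis mat_mod_mat_mul_left)
  finally have inner: "mat_mod p (mat_mul (mat_mul (?M w) (?M q)) (?M (qconj w)))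
      = mat_mod p (mat_scale (qnorm w) (?M (qrot w q)))"
    by (simp add: rot quat_mat_scale)
  have "rot_mat w \<otimes>\<^bsub>G\<^esub> \<phi> q \<otimes>\<^bsub>G\<^esub> inv\<^bsub>G\<^esub> (rot_mat w)
      = mat_mod p (mat_scale c (mat_mul (mat_mul (?M w) (?M q)) (?M (qconj w))))"
    unfolding inv_rot_mat[OF w c] by (simp add: rot_mat_def \<phi>_eq_quat_mat[OF q] mat2_mult_conv mat_mul_scale)
  also have "\<dots> = mat_mod p (mat_scale c (mat_scale (qnorm w) (?M (qrot w q))))"
    by (metis inner mat_mod_mat_scale)
  also have "\<dots> = \<phi> (qrot w q)"
    using mat_mod_scale_unit[OF c] \<phi>_eq_quat_mat[OF rot(2)] by (simp add: mat_scale_scale)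
  finally show ?thesis .
qed

lemma rot_mat_in_normalizer:
  assumes w: "w \<in> set rot_reps"
  shows "rot_mat w \<in> N"
proof -
  let ?c = "\<lambda>h. rot_mat w \<otimes>\<^bsub>G\<^esub> h \<otimes>\<^bsub>G\<^esub> inv\<^bsub>G\<^esub> (rot_mat w)"
  have "?c ` H = H"
  proof
    show "?c ` H \<subseteq> H"
    proof
      fix x assume "x \<in> ?c ` H"
      then obtain h where h: "h \<in> H" "x = ?c h" by blast
      then have "x = \<phi> (qrot w (\<psi> h))" using conj_rot_mat[OF w \<psi>_in[OF h(1)]] \<phi>_\<psi>[OF h(1)] by simp
      then show "x \<in> H" using qrot_Q8 w \<psi>_in[OF h(1)] \<phi>_in by blast
    qed
    show "H \<subseteq> ?c ` H"
    proof
      fix h assume "h \<in> H"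
      then obtain q' where q': "q' \<in> Q8" "qrot w q' = \<psi> h" using qrot_surj w \<psi>_in by blast
      then have "h = ?c (\<phi> q')" using conj_rot_mat[OF w q'(1)] \<phi>_\<psi>[OF \<open>h \<in> H\<close>] by simp
      then show "h \<in> ?c ` H" using q'(1) \<phi>_in by blast
    qed
  qed
  then show ?thesis using G.normalizer_iff[OF H_subset] rot_mat_in_carrier[OF w] by blast
qed

lemma group_HG: "group HG"
  using G.subgroup_imp_group[OF subgroup] .

definition aut_key :: "(mat2 \<Rightarrow> mat2) \<Rightarrow> mat2 \<times> mat2" where
  "aut_key \<alpha> = (\<psi> (\<alpha> I), \<psi> (\<alpha> J))"

context
  fixes \<alpha> assumes \<alpha>: "\<alpha> \<in> auto HG"
begin

lemma auto_in: "x \<in> H \<Longrightarrow> \<alpha> x \<in> H"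
  using \<alpha> by (auto simp: auto_def hom_def)

lemma auto_mult: "x \<in> H \<Longrightarrow> y \<in> H \<Longrightarrow> \<alpha> (mat2_mult p x y) = mat2_mult p (\<alpha> x) (\<alpha> y)"
  using \<alpha> by (auto simp: auto_def hom_def)

lemma auto_inj: "inj_on \<alpha> H"
  using \<alpha> by (simp add: auto_def Bij_def bij_betw_def)

lemma auto_one: "\<alpha> id2 = id2"
  using \<alpha> group_HG group_hom.hom_one[of HG HG \<alpha>]
  by (simp add: auto_def group_hom_def group_hom_axioms_def)

text \<open>\<open>Z\<close> is the only involution of \<open>H\<close>.\<close>

lemma auto_Z: "\<alpha> Z = Z"
proof -
  have "Z \<noteq> id2" using \<phi>_inj Q8_elems \<phi>_one unfolding Z_def by fastforce
  moreover have "id2 \<in> H" using subgroup.one_closed[OF subgroup] by simp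
  ultimately have x: "\<alpha> Z \<in> H" "\<alpha> Z \<noteq> id2"
    using auto_in auto_one auto_inj IJKZ_in(4) by (metis inj_onD)+
  have "mat2_mult p (\<alpha> Z) (\<alpha> Z) = id2"
    using auto_mult[OF IJKZ_in(4) IJKZ_in(4)] \<phi>_mult[OF Q8_elems(2) Q8_elems(2)] auto_one
    by (simp add: Z_def ham_mult_def \<phi>_one)
  then have "ham_mult (\<psi> (\<alpha> Z)) (\<psi> (\<alpha> Z)) = qone"
    using \<psi>_mult[OF x(1) x(1)] \<psi>_\<phi>[OF Q8_elems(1)] \<phi>_one by simp
  then have "\<psi> (\<alpha> Z) = qneg"
    using Q8_square_one \<psi>_in[OF x(1)] x(2) \<phi>_\<psi>[OF x(1)] \<phi>_one by force
  then show ?thesis using \<phi>_\<psi>[OF x(1)] by (simp add: Z_def)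
qed

lemma auto_\<phi>_neg:
  assumes "x \<in> Q8" "y \<in> Q8" "\<alpha> (\<phi> x) = \<phi> y"
  shows "\<alpha> (\<phi> (ham_mult qneg x)) = \<phi> (ham_mult qneg y)"
  using auto_mult[OF IJKZ_in(4) \<phi>_in[OF assms(1)]] assms auto_Z Q8_elems
  by (simp add: \<phi>_mult Z_def)

lemma aut_key_Q8: "fst (aut_key \<alpha>) \<in> Q8" "snd (aut_key \<alpha>) \<in> Q8"
  using \<psi>_in auto_in IJKZ_in by (simp_all add: aut_key_def)

lemma \<phi>_aut_key: "\<phi> (fst (aut_key \<alpha>)) = \<alpha> I" "\<phi> (snd (aut_key \<alpha>)) = \<alpha> J"
  using \<phi>_\<psi> auto_in IJKZ_in by (simp_all add: aut_key_def)

lemma auto_\<phi>: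
  assumes "q \<in> Q8"
  shows "\<alpha> (\<phi> q) = \<phi> (q8_map (fst (aut_key \<alpha>)) (snd (aut_key \<alpha>)) q)"
proof -
  obtain u v where uv: "aut_key \<alpha> = (u, v)" by (cases "aut_key \<alpha>")
  then have Q8: "u \<in> Q8" "v \<in> Q8" "ham_mult u v \<in> Q8"
    using aut_key_Q8 Q8_mult_closed by (metis fst_conv snd_conv)+
  have I: "\<alpha> (\<phi> qi) = \<phi> u" and J: "\<alpha> (\<phi> qj) = \<phi> v"
    using \<phi>_aut_key uv by (simp_all add: I_def J_def)
  have "\<phi> qk = mat2_mult p I J"
    using \<phi>_mult[OF Q8_elems(3,4)] by (simp add: I_def J_def ham_mult_def)
  then have K: "\<alpha> (\<phi> qk) = \<phi> (ham_mult u v)"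
    using auto_mult[OF IJKZ_in(1,2)] I J Q8 by (simp add: I_def J_def \<phi>_mult)
  have "qneg = ham_mult qneg qone" by (simp add: ham_mult_def)
  with assms show ?thesis
    using auto_one auto_Z I J K auto_\<phi>_neg[OF _ _ I] auto_\<phi>_neg[OF _ _ J] auto_\<phi>_neg[OF _ _ K] Q8 Q8_elems uv
    by (cases rule: Q8_cases) (auto simp: q8_map_def ham_mult_def \<phi>_one Z_def)
qed

lemma aut_key_in_aut_keys: "aut_key \<alpha> \<in> aut_keys"
proof -
  obtain u v where uv: "aut_key \<alpha> = (u, v)" by (cases "aut_key \<alpha>")
  then have Q8: "u \<in> Q8" "v \<in> Q8" using aut_key_Q8 by (metis fst_conv snd_conv)+
  have I: "\<phi> u = \<alpha> I" and J: "\<phi> v = \<alpha> J" using \<phi>_aut_key uv by simp_all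
  have square: "ham_mult x x = qneg" if "x \<in> Q8" "\<phi> x = \<alpha> X" "X \<in> H" "mat2_mult p X X = Z" for x X
  proof -
    have "\<phi> (ham_mult x x) = mat2_mult p (\<alpha> X) (\<alpha> X)" using that(1,2) \<phi>_mult by simp
    also have "\<dots> = \<phi> qneg" using auto_mult[OF that(3) that(3)] that(4) auto_Z by (simp add: Z_def)
    finally show ?thesis using \<phi>_inj[OF Q8_mult_closed[OF that(1,1)] Q8_elems(2)] by simp
  qed
  have "ham_mult u u = qneg" "ham_mult v v = qneg"
    using square[OF Q8(1) I IJKZ_in(1) IJ_square(1)] square[OF Q8(2) J IJKZ_in(2) IJ_square(2)] by simp_all
  moreover have "v \<noteq> u"
  proof
    assume "v = u"
    then have "\<alpha> J = \<alpha> I" using I J by simp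
    then have "\<phi> qj = \<phi> qi" using inj_onD[OF auto_inj _ IJKZ_in(2,1)] by (simp add: I_def J_def)
    then show False using \<phi>_inj[OF Q8_elems(4,3)] by simp
  qed
  moreover have "v \<noteq> ham_mult qneg u"
  proof
    assume "v = ham_mult qneg u"
    then have "\<alpha> (\<phi> qj) = \<alpha> (\<phi> (ham_mult qneg qi))"
      using auto_\<phi>_neg[OF Q8_elems(3) Q8(1)] I J by (simp add: I_def J_def)
    then have "\<phi> qj = \<phi> (ham_mult qneg qi)"
      using inj_onD[OF auto_inj _ \<phi>_in \<phi>_in] Q8_elems Q8_mult_closed by blast
    then show False using \<phi>_inj[OF Q8_elems(4) Q8_mult_closed[OF Q8_elems(2,3)]] by (simp add: ham_mult_def)
  qed
  ultimately have "(u, v) \<in> aut_keys" using Q8_generating_pairs Q8 by blast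
  then show ?thesis using uv by simp
qed

end

lemma aut_key_inj: "inj_on aut_key (auto HG)"
proof
  fix \<alpha> \<beta> assume \<alpha>: "\<alpha> \<in> auto HG" and \<beta>: "\<beta> \<in> auto HG" and eq: "aut_key \<alpha> = aut_key \<beta>"
  show "\<alpha> = \<beta>"
  proof (rule extensionalityI)
    show "\<alpha> \<in> extensional H" "\<beta> \<in> extensional H" using \<alpha> \<beta> by (simp_all add: auto_def Bij_def)
    fix h assume h: "h \<in> H"
    have "\<alpha> (\<phi> (\<psi> h)) = \<beta> (\<phi> (\<psi> h))"
      unfolding auto_\<phi>[OF \<alpha> \<psi>_in[OF h]] auto_\<phi>[OF \<beta> \<psi>_in[OF h]] eq ..
    then show "\<alpha> h = \<beta> h" unfolding \<phi>_\<psi>[OF h] .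
  qed
qed

lemma aut_key_compose:
  assumes \<alpha>: "\<alpha> \<in> auto HG" and \<beta>: "\<beta> \<in> auto HG"
  shows "aut_key (compose H \<alpha> \<beta>) = key_comp (aut_key \<alpha>) (aut_key \<beta>)"
proof -
  have "\<psi> (compose H \<alpha> \<beta> X) = q8_map (fst (aut_key \<alpha>)) (snd (aut_key \<alpha>)) x"
    if "X \<in> H" "\<beta> X = \<phi> x" "x \<in> Q8" for X x
  proof -
    have "compose H \<alpha> \<beta> X = \<phi> (q8_map (fst (aut_key \<alpha>)) (snd (aut_key \<alpha>)) x)"
      using that auto_\<phi>[OF \<alpha> that(3)] by (simp add: compose_def)
    then show ?thesis using \<psi>_\<phi> q8_map_Q8 aut_key_Q8[OF \<alpha>] that(3) by simp
  qed
  then show ?thesis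
    using IJKZ_in \<phi>_aut_key[OF \<beta>] aut_key_Q8[OF \<beta>] by (simp add: aut_key_def key_comp_def)
qed

lemma aut_key_conj_rot_mat:
  assumes w: "w \<in> set rot_reps"
  shows "aut_key (cj (rot_mat w)) = rot_key w"
proof -
  have "cj (rot_mat w) (\<phi> q) = \<phi> (qrot w q)" if "q \<in> Q8" for q
    using conj_rot_mat[OF w that] \<phi>_in[OF that] by (simp add: G.conj_aut_apply)
  then show ?thesis
    using \<psi>_\<phi> qrot_Q8 w Q8_elems by (simp add: aut_key_def rot_key_def I_def J_def)
qed

lemma aut_key_image: "aut_key ` auto HG = aut_keys"
proof
  show "aut_key ` auto HG \<subseteq> aut_keys" using aut_key_in_aut_keys by blast
  show "aut_keys \<subseteq> aut_key ` auto HG"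
  proof
    fix a assume "a \<in> aut_keys"
    then obtain w where w: "w \<in> set rot_reps" "a = rot_key w" by (auto simp: aut_keys_def)
    have "cj (rot_mat w) \<in> auto HG"
      using G.conj_aut_in_auto[OF subgroup rot_mat_in_normalizer[OF w(1)]] .
    then show "a \<in> aut_key ` auto HG"
      using aut_key_conj_rot_mat[OF w(1)] w(2) by (intro image_eqI) simp_all
  qed
qed

lemma card_auto: "card (auto HG) = 24"
  using card_image[OF aut_key_inj] aut_key_image card_aut_keys by simp

lemma auto_eq_conj_rot_mat:
  assumes \<alpha>: "\<alpha> \<in> auto HG"
  obtains w where "w \<in> set rot_reps" "\<alpha> = cj (rot_mat w)"
proof -
  have "aut_key \<alpha> \<in> rot_key ` set rot_reps"
    using aut_key_in_aut_keys[OF \<alpha>] unfolding aut_keys_def .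
  then obtain w where w: "w \<in> set rot_reps" "aut_key \<alpha> = rot_key w" by blast
  have "cj (rot_mat w) \<in> auto HG"
    using G.conj_aut_in_auto[OF subgroup rot_mat_in_normalizer[OF w(1)]] .
  then have "\<alpha> = cj (rot_mat w)"
    using inj_onD[OF aut_key_inj] \<alpha> w aut_key_conj_rot_mat by simp
  then show ?thesis using that w(1) by blast
qed

lemma conj_aut_image: "cj ` N = auto HG"
proof
  show "cj ` N \<subseteq> auto HG" using G.conj_aut_in_auto[OF subgroup] by blast
  show "auto HG \<subseteq> cj ` N"
  proof
    fix \<alpha> assume "\<alpha> \<in> auto HG"
    then obtain w where "w \<in> set rot_reps" "\<alpha> = cj (rot_mat w)" by (rule auto_eq_conj_rot_mat)
    then show "\<alpha> \<in> cj ` N" using rot_mat_in_normalizer by blast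
  qed
qed

lemma commute_IJ_scalar:
  assumes g: "g \<in> carrier G" and "g \<otimes>\<^bsub>G\<^esub> I = I \<otimes>\<^bsub>G\<^esub> g" "g \<otimes>\<^bsub>G\<^esub> J = J \<otimes>\<^bsub>G\<^esub> g"
  shows "g = (ent1 g, 0, 0, ent1 g)"
proof -
  have "commute_mod p I g" "commute_mod p J g"
    using assms(2,3) by (simp_all add: commute_mod_def mat2_mult_conv)
  then have "int p dvd ent2 g \<and> int p dvd ent3 g \<and> int p dvd ent1 g - ent4 g"
    using commute_mod_scalar[OF prime _ _ not_commute_IJ(1)] by blast
  then show ?thesis using reduced_scalar mat_mod_carrier[OF g] by blast
qed

lemma scalar_in_carrier_iff: "(a, 0, 0, a) \<in> carrier G \<longleftrightarrow> a \<in> {1..<int p}"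
proof
  assume a: "(a, 0, 0, a) \<in> carrier G"
  then have "a mod int p = a" using mat_mod_carrier[OF a] by (simp add: mat_mod_def)
  moreover have "a \<noteq> 0" using det_int_carrier[OF a] by (auto simp: det_int_def)
  ultimately show "a \<in> {1..<int p}" using mod_eq_self_iff[of "int p" a] p_pos by auto
next
  assume a: "a \<in> {1..<int p}"
  then have "\<not> int p dvd a" using zdvd_imp_le by fastforce
  then have "\<not> int p dvd a * a" using prime_int prime_dvd_multD by blast
  then show "(a, 0, 0, a) \<in> carrier G" using a p_pos by (simp add: GL2_carrier_iff det_int_def mat_mod_def)
qed

lemma kernel_conj_aut: "kernel NG A cj = GL2_scalars p"
proof -
  have H_sub: "H \<subseteq> carrier G" by (rule H_subset)
  have "g \<in> N \<and> cj g = (\<lambda>x\<in>H. x) \<longleftrightarrow> g \<in> GL2_scalars p" for g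
  proof
    assume g: "g \<in> N \<and> cj g = (\<lambda>x\<in>H. x)"
    then have gG: "g \<in> carrier G" using G.normalizer_iff[OF H_sub] by blast
    then have "g \<otimes>\<^bsub>G\<^esub> I = I \<otimes>\<^bsub>G\<^esub> g" "g \<otimes>\<^bsub>G\<^esub> J = J \<otimes>\<^bsub>G\<^esub> g"
      using g G.conj_aut_eq_id_iff[OF H_sub gG] IJKZ_in by auto
    then have "g = (ent1 g, 0, 0, ent1 g)" using commute_IJ_scalar[OF gG] by blast
    then show "g \<in> GL2_scalars p"
      using gG scalar_in_carrier_iff unfolding GL2_scalars_def by (metis (mono_tags, lifting) mem_Collect_eq)
  next
    assume "g \<in> GL2_scalars p"
    then obtain a where a: "g = (a, 0, 0, a)" "a \<in> {1..<int p}" by (auto simp: GL2_scalars_def)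
    then have gG: "g \<in> carrier G" using scalar_in_carrier_iff by simp
    have comm: "g \<otimes>\<^bsub>G\<^esub> h = h \<otimes>\<^bsub>G\<^esub> g" if "h \<in> H" for h
      using a(1) by (simp add: mat2_mult_conv mat2_eq_iff algebra_simps)
    then have "(\<lambda>h. g \<otimes>\<^bsub>G\<^esub> h \<otimes>\<^bsub>G\<^esub> inv\<^bsub>G\<^esub> g) ` H = H"
      using gG H_sub by (force simp: G.m_assoc simp del: GL2_simps)
    then show "g \<in> N \<and> cj g = (\<lambda>x\<in>H. x)"
      using gG comm G.normalizer_iff[OF H_sub] G.conj_aut_eq_id_iff[OF H_sub gG] by blast
  qed
  then show ?thesis by (auto simp: kernel_def AutoGroup_one)
qed

lemma group_hom_conj_aut: "group_hom NG A cj"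
  using G.subgroup_imp_group[OF G.normalizer_imp_subgroup[OF H_subset]] group.AutoGroup[OF group_HG]
    G.conj_aut_hom[OF subgroup]
  by (simp add: group_hom_def group_hom_axioms_def)

lemma quotient_iso_auto: "NG Mod GL2_scalars p \<cong> A"
  using group_hom.FactGroup_iso[OF group_hom_conj_aut] conj_aut_image kernel_conj_aut by simp

subsection \<open>\<open>Aut(H) \<cong> S\<^sub>4\<close> via the diagonals of the cube\<close>

definition aut_perm :: "(mat2 \<Rightarrow> mat2) \<Rightarrow> nat \<Rightarrow> nat" where
  "aut_perm \<alpha> = perm_of_list (diagonal_perm (aut_key \<alpha>))"

lemma aut_perm_hom: "aut_perm \<in> hom A (sym_group 4)"
proof (rule homI)
  fix \<alpha> assume "\<alpha> \<in> carrier A"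
  then show "aut_perm \<alpha> \<in> carrier (sym_group 4)"
    using perm_of_list_permutes[of "diagonal_perm (aut_key \<alpha>)"] diagonal_perm_bij aut_key_in_aut_keys
    by (simp add: aut_perm_def sym_group_carrier length_diagonal_perm)
next
  fix \<alpha> \<beta> assume "\<alpha> \<in> carrier A" "\<beta> \<in> carrier A"
  then have \<alpha>\<beta>: "\<alpha> \<in> auto HG" "\<beta> \<in> auto HG" "aut_key \<alpha> \<in> aut_keys" "aut_key \<beta> \<in> aut_keys"
    using aut_key_in_aut_keys by auto
  have "aut_perm (\<alpha> \<otimes>\<^bsub>A\<^esub> \<beta>) = perm_of_list (diagonal_perm (key_comp (aut_key \<alpha>) (aut_key \<beta>)))"
    using \<alpha>\<beta> by (simp add: aut_perm_def AutoGroup_mult aut_key_compose)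
  also have "\<dots> = perm_of_list (list_comp (diagonal_perm (aut_key \<alpha>)) (diagonal_perm (aut_key \<beta>)))"
    using key_comp_diagonal_perm \<alpha>\<beta> by simp
  also have "\<dots> = aut_perm \<alpha> \<circ> aut_perm \<beta>"
    using perm_of_list_comp diagonal_perm_bij \<alpha>\<beta> by (simp add: aut_perm_def length_diagonal_perm)
  finally show "aut_perm (\<alpha> \<otimes>\<^bsub>A\<^esub> \<beta>) = aut_perm \<alpha> \<otimes>\<^bsub>sym_group 4\<^esub> aut_perm \<beta>"
    by (simp add: sym_group_mult)
qed

lemma aut_perm_inj: "inj_on aut_perm (auto HG)"
proof
  fix \<alpha> \<beta> assume \<alpha>\<beta>: "\<alpha> \<in> auto HG" "\<beta> \<in> auto HG" "aut_perm \<alpha> = aut_perm \<beta>"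
  then have "diagonal_perm (aut_key \<alpha>) = diagonal_perm (aut_key \<beta>)"
    using perm_of_list_inj by (simp add: aut_perm_def length_diagonal_perm)
  then have "aut_key \<alpha> = aut_key \<beta>" using diagonal_perm_inj aut_key_in_aut_keys \<alpha>\<beta> by blast
  then show "\<alpha> = \<beta>" using inj_onD[OF aut_key_inj] \<alpha>\<beta> by blast
qed

lemma auto_iso_sym_group: "A \<cong> sym_group 4"
proof -
  have "aut_perm ` auto HG \<subseteq> carrier (sym_group 4)" using aut_perm_hom by (auto simp: hom_def)
  moreover have "card (aut_perm ` auto HG) = card (carrier (sym_group 4))"
    using card_image[OF aut_perm_inj] card_auto sym_group_card_carrier[of 4] by (simp add: fact_numeral)
  moreover have "finite (carrier (sym_group 4))"
    using sym_group_card_carrier[of 4] card_ge_0_finite[of "carrier (sym_group 4)"] by (simp add: fact_numeral)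
  ultimately have "bij_betw aut_perm (auto HG) (carrier (sym_group 4))"
    using aut_perm_inj card_subset_eq by (simp add: bij_betw_def)
  then show ?thesis using aut_perm_hom by (auto simp: is_iso_def iso_def)
qed

text \<open>Two elements of \<open>N\<close> inducing the same automorphism differ by a scalar, whose determinant is a
  square.\<close>

lemma normalizer_decomp:
  assumes g: "g \<in> N"
  obtains w a where "w \<in> set rot_reps" "\<not> int p dvd a" "cj g = cj (rot_mat w)"
    "det_int g mod int p = (qnorm w * (a * a)) mod int p"
proof -
  obtain w where w: "w \<in> set rot_reps" "cj g = cj (rot_mat w)"
    using auto_eq_conj_rot_mat[OF G.conj_aut_in_auto[OF subgroup g]] by blast
  define X where "X = rot_mat w"
  have XG: "X \<in> carrier G" using rot_mat_in_carrier[OF w(1)] by (simp add: X_def)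
  have gG: "g \<in> carrier G" using g G.normalizer_iff[OF H_subset] by blast
  define Y where "Y = inv\<^bsub>G\<^esub> X \<otimes>\<^bsub>G\<^esub> g"
  have YG: "Y \<in> carrier G" using XG gG by (simp add: Y_def del: GL2_simps)
  have "Y \<otimes>\<^bsub>G\<^esub> h = h \<otimes>\<^bsub>G\<^esub> Y" if h: "h \<in> H" for h
  proof -
    have "g \<otimes>\<^bsub>G\<^esub> h \<otimes>\<^bsub>G\<^esub> inv\<^bsub>G\<^esub> g = X \<otimes>\<^bsub>G\<^esub> h \<otimes>\<^bsub>G\<^esub> inv\<^bsub>G\<^esub> X"
      using w(2) G.conj_aut_apply[OF h, of g] G.conj_aut_apply[OF h, of X] by (simp add: X_def)
    then show ?thesis
      unfolding Y_def using G.conj_eq_imp_commute[OF XG gG] h H_subset by (meson subsetD)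
  qed
  then have "Y = (ent1 Y, 0, 0, ent1 Y)" using commute_IJ_scalar[OF YG] IJKZ_in by blast
  then obtain a where a: "Y = (a, 0, 0, a)" by blast
  have "\<not> int p dvd a" using det_int_carrier[OF YG] a by (auto simp: det_int_def)
  have "g = X \<otimes>\<^bsub>G\<^esub> Y" using XG gG unfolding Y_def by (simp del: GL2_simps add: G.m_assoc[symmetric])
  then have "det_int g mod int p = (det_int X * det_int Y) mod int p"
    by (simp add: mat2_mult_conv det_int_mat_mod det_int_mat_mul)
  also have "\<dots> = (qnorm w * (a * a)) mod int p"
  proof -
    have "det_int Y = a * a" by (simp add: a det_int_def)
    then show ?thesis using det_rot_mat[of w] unfolding X_def by (metis mod_mult_left_eq)
  qed
  finally show ?thesis using that w \<open>\<not> int p dvd a\<close> X_def by blast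
qed

lemma QuadRes_det_iff_qnorm:
  assumes g: "g \<in> N"
  obtains w where "w \<in> set rot_reps" "cj g = cj (rot_mat w)"
    "QuadRes (int p) (mat2_det p g) \<longleftrightarrow> QuadRes (int p) (qnorm w)"
proof -
  obtain w a where w: "w \<in> set rot_reps" "\<not> int p dvd a" "cj g = cj (rot_mat w)"
    "det_int g mod int p = (qnorm w * (a * a)) mod int p"
    by (rule normalizer_decomp[OF g])
  have "QuadRes (int p) (mat2_det p g) \<longleftrightarrow> QuadRes (int p) (qnorm w * (a * a))"
    using w(4) QuadRes_mod by (metis mat2_det_conv)
  also have "\<dots> \<longleftrightarrow> QuadRes (int p) (qnorm w)" using QuadRes_mult_square[OF prime_int w(2)] .
  finally show ?thesis using that w(1,3) by blast
qed

lemma QuadRes_qnorm_iff: "w \<in> set rot_reps \<Longrightarrow> QuadRes (int p) (qnorm w) \<longleftrightarrow> qnorm w \<noteq> 2 \<or> QuadRes (int p) 2"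
  using qnorm_rot_reps QuadRes_square[of "int p" 1] QuadRes_square[of "int p" 2] by auto

lemma QuadRes_det_if_QuadRes_2: "QuadRes (int p) 2 \<Longrightarrow> g \<in> N \<Longrightarrow> QuadRes (int p) (mat2_det p g)"
  using QuadRes_det_iff_qnorm QuadRes_qnorm_iff by metis

definition even_auts :: "(mat2 \<Rightarrow> mat2) set" where
  "even_auts = {\<alpha> \<in> auto HG. aut_key \<alpha> \<in> even_aut_keys}"

lemma card_even_auts: "card even_auts = 12"
proof -
  have "even_aut_keys \<subseteq> aut_key ` auto HG"
    unfolding aut_key_image by (auto simp: aut_keys_def even_aut_keys_def)
  then have "aut_key ` even_auts = even_aut_keys" by (auto simp: even_auts_def)
  moreover have "inj_on aut_key even_auts"
    using aut_key_inj by (rule inj_on_subset) (auto simp: even_auts_def)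
  ultimately show ?thesis using card_image card_even_aut_keys by metis
qed

text \<open>The subgroup of index 2 contains every square, and the 12 even automorphisms are squares.\<close>

lemma alt_subgroup_eq_even_auts:
  assumes S: "subgroup S A" "A\<lparr>carrier := S\<rparr> \<cong> alt_group 4"
  shows "S = even_auts"
proof -
  interpret A: group A by (rule group.AutoGroup[OF group_HG])
  have "card S = card (carrier (alt_group 4))" using iso_same_card[OF S(2)] by simp
  moreover have "2 * card (carrier (alt_group 4)) = 24"
    using alt_group_card_carrier[of 4] by (simp add: fact_numeral)
  ultimately have card_S: "card S = 12" by simp
  have fin: "finite (auto HG)" using card_auto card_ge_0_finite[of "auto HG"] by simp
  have sub: "even_auts \<subseteq> S"
  proof
    fix \<alpha> assume "\<alpha> \<in> even_auts"
    then have \<alpha>: "\<alpha> \<in> auto HG" "aut_key \<alpha> \<in> even_aut_keys" by (auto simp: even_auts_def)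
    then obtain b where b: "b \<in> aut_keys" "key_comp b b = aut_key \<alpha>" using even_aut_keys_squares by blast
    then have "b \<in> aut_key ` auto HG" unfolding aut_key_image by blast
    then obtain \<beta> where \<beta>: "\<beta> \<in> auto HG" "aut_key \<beta> = b" by blast
    then have "aut_key (\<beta> \<otimes>\<^bsub>A\<^esub> \<beta>) = aut_key \<alpha>" using b aut_key_compose by (simp add: AutoGroup_mult)
    then have "\<alpha> = \<beta> \<otimes>\<^bsub>A\<^esub> \<beta>" using inj_onD[OF aut_key_inj] \<alpha>(1) A.m_closed \<beta>(1) by simp
    then show "\<alpha> \<in> S"
      using A.square_in_index_two_subgroup[OF _ S(1)] fin card_auto card_S \<beta>(1) by simp
  qed
  have "finite S" using fin subgroup.subset[OF S(1)] finite_subset by auto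
  then show ?thesis using card_subset_eq[OF _ sub] card_S card_even_auts by simp
qed

lemma QuadRes_det_iff_alt:
  assumes "\<not> QuadRes (int p) 2" "subgroup S A" "A\<lparr>carrier := S\<rparr> \<cong> alt_group 4" "g \<in> N"
  shows "QuadRes (int p) (mat2_det p g) \<longleftrightarrow> cj g \<in> S"
proof -
  obtain w where w: "w \<in> set rot_reps" "cj g = cj (rot_mat w)"
    "QuadRes (int p) (mat2_det p g) \<longleftrightarrow> QuadRes (int p) (qnorm w)"
    by (rule QuadRes_det_iff_qnorm[OF assms(4)])
  have "cj g \<in> S \<longleftrightarrow> aut_key (cj g) \<in> even_aut_keys"
    using alt_subgroup_eq_even_auts[OF assms(2,3)] G.conj_aut_in_auto[OF subgroup assms(4)]
    by (simp add: even_auts_def)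
  also have "\<dots> \<longleftrightarrow> rot_key w \<in> even_aut_keys"
    using w(1,2) aut_key_conj_rot_mat by simp
  also have "\<dots> \<longleftrightarrow> qnorm w \<noteq> 2"
  proof
    assume "qnorm w \<noteq> 2"
    then show "rot_key w \<in> even_aut_keys" using w(1) unfolding even_aut_keys_def by (intro imageI) simp
  qed (use rot_key_in_even_aut_keys w(1) in blast)
  finally show ?thesis using w(1,3) QuadRes_qnorm_iff assms(1) by simp
qed
end

theorem lemma4p3:
  fixes p :: nat and H :: "mat2 set"
  assumes "prime p" and "p \<ge> 3"
    and "subgroup H (GL2 p)"
    and "(GL2 p)\<lparr>carrier := H\<rparr> \<cong> quaternion_group"
  shows "conj_aut (GL2 p) H \<in> hom ((GL2 p)\<lparr>carrier := normalizer (GL2 p) H\<rparr>)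
                                  (AutoGroup ((GL2 p)\<lparr>carrier := H\<rparr>))
       \<and> conj_aut (GL2 p) H ` normalizer (GL2 p) H = carrier (AutoGroup ((GL2 p)\<lparr>carrier := H\<rparr>))
       \<and> kernel ((GL2 p)\<lparr>carrier := normalizer (GL2 p) H\<rparr>)
               (AutoGroup ((GL2 p)\<lparr>carrier := H\<rparr>)) (conj_aut (GL2 p) H) = GL2_scalars p
       \<and> ((GL2 p)\<lparr>carrier := normalizer (GL2 p) H\<rparr>) Mod GL2_scalars p
           \<cong> AutoGroup ((GL2 p)\<lparr>carrier := H\<rparr>)
       \<and> AutoGroup ((GL2 p)\<lparr>carrier := H\<rparr>) \<cong> sym_group 4
       \<and> (Legendre 2 (int p) = 1 \<longrightarrow>
           (\<forall>g \<in> normalizer (GL2 p) H. QuadRes (int p) (mat2_det p g)))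
       \<and> (Legendre 2 (int p) = -1 \<longrightarrow>
           (\<forall>K. subgroup K (AutoGroup ((GL2 p)\<lparr>carrier := H\<rparr>)) \<and>
                (AutoGroup ((GL2 p)\<lparr>carrier := H\<rparr>))\<lparr>carrier := K\<rparr> \<cong> alt_group 4 \<longrightarrow>
              (\<forall>g \<in> normalizer (GL2 p) H.
                 QuadRes (int p) (mat2_det p g) \<longleftrightarrow> conj_aut (GL2 p) H g \<in> K)))"
proof -
  obtain \<psi> where "\<psi> \<in> iso ((GL2 p)\<lparr>carrier := H\<rparr>) quaternion_group"
    using assms(4) unfolding is_iso_def by blast
  then interpret quaternion_subgroup p H \<psi>
    using assms(1-3) by (simp add: quaternion_subgroup_def)
  have Legendre: "Legendre 2 (int p) = 1 \<Longrightarrow> QuadRes (int p) 2"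
    "Legendre 2 (int p) = -1 \<Longrightarrow> \<not> QuadRes (int p) 2"
    by (auto simp: Legendre_def split: if_splits)
  show ?thesis
    using group.conj_aut_hom[OF group_GL2[OF assms(1)] assms(3)] conj_aut_image kernel_conj_aut
      quotient_iso_auto auto_iso_sym_group Legendre QuadRes_det_if_QuadRes_2 QuadRes_det_iff_alt
    by auto
qed

end
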